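(* Let $\mathcal{X},\mathcal{Y},\Theta$ be separable Hilbert spaces, $T>0$, $A$ the generator of a contraction semigroup on $\mathcal{X}$, $C\in\mathcal{L}(\mathcal{X},\mathcal{Y})$, $B\in L^2(0,T;\mathcal{L}(\Theta,\mathcal{X}))$, $y\in L^2(0,T;\mathcal{Y})$, $\theta_0\in\Theta$, $\kappa\ge0$, and $U_0\in\mathcal{L}(\Theta)$ self-adjoint with $U_0\ge\delta I$ for some $\delta>0$. Assume the system is exactly observable at time $T$: there is $\gamma_0>0$ with $\int_0^T\|Ce^{At}x\|_{\mathcal{Y}}^2dt\ge\gamma_0^2\|x\|^2_{\mathcal{X}}$ for all $x\in\mathcal{X}$. For $\xi\in\Theta$, $\zeta\in\mathcal{X}$ let $\hat z[\xi,\zeta]$ be the (mild) solution of $$\dot{\hat z}=A\hat z+B\xi+\kappa C^*(y-C\hat z),\qquad \hat z(0)=\zeta,$$ and define $J(\xi,\zeta)=\langle \xi-\theta_0,U_0(\xi-\theta_0)\rangle_\Theta+\int_0^T\|y-C\hat z[\xi,\zeta]\|_{\mathcal{Y}}^2\,d\tau$. Then $J$ is strictly convex on $\Theta\times\mathcal{X}$ (in particular it has a unique minimizer). *)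

theory Defs
  imports "HOL-Analysis.Analysis"
begin

text \<open>Strongly continuous contraction semigroup on a Hilbert space, given by its
  family of bounded operators S t (t \<ge> 0), i.e. S t = e^{At}.\<close>
definition contraction_semigroup :: "(real \<Rightarrow> ('x::real_normed_vector \<Rightarrow>\<^sub>L 'x)) \<Rightarrow> bool" where
  "contraction_semigroup S \<longleftrightarrow>
     S 0 = id_blinfun \<and>
     (\<forall>s\<ge>0. \<forall>t\<ge>0. S (s + t) = S s o\<^sub>L S t) \<and>
     (\<forall>x. continuous_on {0..} (\<lambda>t. S t x)) \<and>
     (\<forall>t\<ge>0. norm (S t) \<le> 1)"

definition is_generator :: "('x::real_normed_vector \<Rightarrow> 'x) \<Rightarrow> 'x set \<Rightarrow> (real \<Rightarrow> ('x \<Rightarrow>\<^sub>L 'x)) \<Rightarrow> bool" where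
  "is_generator A D S \<longleftrightarrow>
     D = {x. \<exists>l. ((\<lambda>h. (1 / h) *\<^sub>R (S h x - x)) \<longlongrightarrow> l) (at_right 0)} \<and>
     (\<forall>x\<in>D. ((\<lambda>h. (1 / h) *\<^sub>R (S h x - x)) \<longlongrightarrow> A x) (at_right 0))"

definition badj :: "('x::real_inner \<Rightarrow>\<^sub>L 'y::real_inner) \<Rightarrow> ('y \<Rightarrow>\<^sub>L 'x)" where
  "badj C = (SOME D :: 'y \<Rightarrow>\<^sub>L 'x. \<forall>x v. inner (blinfun_apply C x) v = inner x (blinfun_apply D v))"

text \<open>Mild solution on [0,T] (extended by 0 outside [0,T]) of
  z' = A z + B xi + kappa C^*(y - C z), z(0) = zeta.\<close>
definition is_mild_sol ::
  "(real \<Rightarrow> ('x::{real_inner,polish_space} \<Rightarrow>\<^sub>L 'x)) \<Rightarrow> (real \<Rightarrow> ('th::real_normed_vector \<Rightarrow>\<^sub>L 'x)) \<Rightarrow>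
   ('x \<Rightarrow>\<^sub>L 'y::{real_inner,polish_space}) \<Rightarrow> real \<Rightarrow> (real \<Rightarrow> 'y) \<Rightarrow> real \<Rightarrow> 'th \<Rightarrow> 'x \<Rightarrow> (real \<Rightarrow> 'x) \<Rightarrow> bool" where
  "is_mild_sol S B C kappa y T xi zeta z \<longleftrightarrow>
     continuous_on {0..T} z \<and>
     (\<forall>t. t \<notin> {0..T} \<longrightarrow> z t = 0) \<and>
     (\<forall>t\<in>{0..T}.
        set_integrable lborel {0..t}
          (\<lambda>s. S (t - s) (B s xi + kappa *\<^sub>R badj C (y s - C (z s)))) \<and>
        z t = S t zeta +
          (\<integral>s\<in>{0..t}. S (t - s) (B s xi + kappa *\<^sub>R badj C (y s - C (z s))) \<partial>lborel))"

definition hatz where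
  "hatz S B C kappa y T xi zeta = (THE z. is_mild_sol S B C kappa y T xi zeta z)"

definition costJ where
  "costJ S B C kappa y T U0 theta0 xi zeta =
     inner (xi - theta0) (U0 (xi - theta0)) +
     (\<integral>\<tau>\<in>{0..T}. (norm (y \<tau> - C (hatz S B C kappa y T xi zeta \<tau>)))\<^sup>2 \<partial>lborel)"

definition strict_convex_on :: "'a::real_vector set \<Rightarrow> ('a \<Rightarrow> real) \<Rightarrow> bool" where
  "strict_convex_on K f \<longleftrightarrow> convex K \<and>
     (\<forall>x\<in>K. \<forall>y\<in>K. x \<noteq> y \<longrightarrow> (\<forall>u::real. 0 < u \<and> u < 1 \<longrightarrow>
        f ((1 - u) *\<^sub>R x + u *\<^sub>R y) < (1 - u) * f x + u * f y))"

end

theory Submission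
  imports Defs
begin

text \<open>Mild solutions of the observer equation exist uniquely, as fixed points of a Picard map that
  contracts in an exponentially weighted sup norm, and depend affinely on \<open>(\<xi>, \<zeta>)\<close>: the observer
  state is \<open>w[\<xi>, \<zeta>] + z\<^sub>y\<close> with \<open>w\<close> linear. Hence \<open>J\<close> is quadratic,
  \<open>J((1 - u) p + u q) = (1 - u) J p + u J q - u (1 - u) Q(p - q)\<close> with
  \<open>Q(\<xi>, \<zeta>) = \<langle>\<xi>, U\<^sub>0 \<xi>\<rangle> + \<integral>\<^sub>0\<^sup>T \<parallel>C w[\<xi>, \<zeta>]\<parallel>\<^sup>2\<close>.
  By the variation-of-constants formula, \<open>C e\<^sup>A\<^sup>t \<zeta>\<close> differs from \<open>C w[\<xi>, \<zeta>]\<close> by terms bounded by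
  \<open>\<parallel>\<xi>\<parallel>\<close> and \<open>\<integral> \<parallel>C w\<parallel>\<close>, so exact observability bounds \<open>\<parallel>\<zeta>\<parallel>\<^sup>2\<close> by \<open>Q\<close>, while \<open>U\<^sub>0 \<ge> \<delta>\<close> bounds
  \<open>\<parallel>\<xi>\<parallel>\<^sup>2\<close>: \<open>Q\<close> is coercive. This gives strict convexity and makes minimizing sequences Cauchy;
  as \<open>Q\<close> is also bounded above, \<open>J\<close> is continuous and the limit is the minimizer.\<close>

section \<open>Bochner integration in Polish normed spaces\<close>

text \<open>The Bochner-integration library is stated for sort \<open>banach\<close>, whereas the state spaces
  here only have sort \<open>{real_normed_vector, polish_space}\<close>. The lemmas below are transferred
  along the isometric embedding \<open>x \<mapsto> (x, 0)\<close> into the Banach space \<open>'x \<times> real\<close>.\<close>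

instance prod :: ("{real_normed_vector,complete_space}", "{real_normed_vector,complete_space}") banach ..

lemma bounded_linear_Pair_zero: "bounded_linear (\<lambda>x::'a::real_normed_vector. (x, 0::real))"
  by (intro bounded_linear_Pair bounded_linear_ident bounded_linear_zero)

lemma integrable_Pair_zero_iff:
  fixes f :: "'a \<Rightarrow> 'x::{real_normed_vector,polish_space}"
  shows "integrable M (\<lambda>s. (f s, 0::real)) \<longleftrightarrow> integrable M f"
  using integrable_bounded_linear[OF bounded_linear_fst, of M "\<lambda>s. (f s, 0::real)"]
    integrable_bounded_linear[OF bounded_linear_Pair_zero, of M f]
  by auto

lemma integral_Pair_zero:
  fixes f :: "'a \<Rightarrow> 'x::{real_normed_vector,polish_space}"
  shows "integral\<^sup>L M (\<lambda>s. (f s, 0::real)) = (integral\<^sup>L M f, 0)"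
  by (rule integral_bounded_linear'[OF bounded_linear_Pair_zero bounded_linear_fst]) auto

lemma borel_measurable_Pair_zero_iff:
  fixes f :: "'a \<Rightarrow> 'x::{real_normed_vector,polish_space}"
  shows "(\<lambda>s. (f s, 0::real)) \<in> borel_measurable M \<longleftrightarrow> f \<in> borel_measurable M"
proof
  assume "(\<lambda>s. (f s, 0::real)) \<in> borel_measurable M"
  from borel_measurable_continuous_on[OF continuous_on_fst[OF continuous_on_id] this]
  show "f \<in> borel_measurable M" by simp
next
  assume "f \<in> borel_measurable M"
  then show "(\<lambda>s. (f s, 0::real)) \<in> borel_measurable M"
    by (rule borel_measurable_continuous_on[rotated]) (intro continuous_intros)
qed

lemma integrable_bound_polish:
  fixes f :: "'a \<Rightarrow> 'x::{real_normed_vector,polish_space}"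
  assumes "integrable M g" "f \<in> borel_measurable M" "AE x in M. norm (f x) \<le> g x"
  shows "integrable M f"
proof -
  have "integrable M (\<lambda>s. (f s, 0::real))"
  proof (rule Bochner_Integration.integrable_bound[OF assms(1)])
    show "(\<lambda>s. (f s, 0::real)) \<in> borel_measurable M"
      using assms(2) borel_measurable_Pair_zero_iff by blast
    show "AE x in M. norm (f x, 0::real) \<le> norm (g x)"
      using assms(3) by eventually_elim (auto simp: norm_Pair)
  qed
  then show ?thesis using integrable_Pair_zero_iff by blast
qed

lemma integrable_norm_polish:
  fixes f :: "'a \<Rightarrow> 'x::{real_normed_vector,polish_space}"
  assumes "integrable M f"
  shows "integrable M (\<lambda>x. norm (f x))"
  using integrable_norm[of M "\<lambda>s. (f s, 0::real)"] assms
  by (simp add: integrable_Pair_zero_iff norm_Pair)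

lemma integral_norm_bound_polish:
  fixes f :: "'a \<Rightarrow> 'x::{real_normed_vector,polish_space}"
  shows "norm (integral\<^sup>L M f) \<le> (\<integral>x. norm (f x) \<partial>M)"
  using integral_norm_bound[of M "\<lambda>s. (f s, 0::real)"] by (simp add: integral_Pair_zero norm_Pair)

lemma integral_dominated_convergence_polish:
  fixes f :: "'a \<Rightarrow> 'x::{real_normed_vector,polish_space}"
  assumes "f \<in> borel_measurable M" "\<And>i. s i \<in> borel_measurable M" "integrable M w"
    and lim: "AE x in M. (\<lambda>i. s i x) \<longlonglongrightarrow> f x"
    and bound: "\<And>i. AE x in M. norm (s i x) \<le> w x"
  shows "(\<lambda>i. integral\<^sup>L M (s i)) \<longlonglongrightarrow> integral\<^sup>L M f"
proof -
  have "(\<lambda>i. integral\<^sup>L M (\<lambda>x. (s i x, 0::real))) \<longlonglongrightarrow> integral\<^sup>L M (\<lambda>x. (f x, 0::real))"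
  proof (rule integral_dominated_convergence[OF _ _ assms(3)])
    show "(\<lambda>x. (f x, 0::real)) \<in> borel_measurable M"
      using assms(1) borel_measurable_Pair_zero_iff by blast
    show "(\<lambda>x. (s i x, 0::real)) \<in> borel_measurable M" for i
      using assms(2) borel_measurable_Pair_zero_iff by blast
    show "AE x in M. (\<lambda>i. (s i x, 0::real)) \<longlonglongrightarrow> (f x, 0)"
      using lim by eventually_elim (intro tendsto_intros)
    show "AE x in M. norm (s i x, 0::real) \<le> w x" for i
      using bound[of i] by eventually_elim (simp add: norm_Pair)
  qed
  from tendsto_fst[OF this] show ?thesis by (simp add: integral_Pair_zero)
qed

lemma borel_measurable_blinfun_apply_pointwise:
  fixes F :: "'a \<Rightarrow> ('x::{real_normed_vector,polish_space} \<Rightarrow>\<^sub>L 'y::{real_normed_vector,polish_space})"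
  assumes F: "\<And>a. (\<lambda>s. F s a) \<in> borel_measurable M"
    and v: "v \<in> borel_measurable M"
  shows "(\<lambda>s. F s (v s)) \<in> borel_measurable M"
proof -
  obtain G where G: "\<And>i. simple_function M (G i)" "\<And>x. x \<in> space M \<Longrightarrow> (\<lambda>i. G i x) \<longlonglongrightarrow> v x"
    using borel_measurable_implies_sequence_metric[OF v, of 0] by blast
  have "(\<lambda>s. F s (G i s)) \<in> borel_measurable M" for i
  proof -
    have fin: "finite (G i ` space M)" and pre: "\<And>a. G i -` {a} \<inter> space M \<in> sets M"
      using G(1) simple_functionD by blast+
    have "(\<lambda>s. \<Sum>a\<in>G i ` space M. indicator (G i -` {a} \<inter> space M) s *\<^sub>R F s a) \<in> borel_measurable M"
      using pre F by (intro borel_measurable_sum borel_measurable_scaleR borel_measurable_indicator) auto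
    moreover have "F s (G i s) = (\<Sum>a\<in>G i ` space M. indicator (G i -` {a} \<inter> space M) s *\<^sub>R F s a)"
      if "s \<in> space M" for s
    proof -
      have "(\<Sum>a\<in>G i ` space M. indicator (G i -` {a} \<inter> space M) s *\<^sub>R F s a)
          = (\<Sum>a\<in>G i ` space M. if a = G i s then F s a else 0)"
        using that by (intro sum.cong) (auto simp: indicator_def)
      also have "\<dots> = F s (G i s)" using fin that by (simp add: sum.delta')
      finally show ?thesis by simp
    qed
    ultimately show ?thesis by (metis (no_types, lifting) measurable_cong)
  qed
  then show ?thesis
  proof (rule borel_measurable_LIMSEQ_metric)
    show "(\<lambda>i. F x (G i x)) \<longlonglongrightarrow> F x (v x)" if "x \<in> space M" for x
      using G(2)[OF that] by (intro tendsto_intros)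
  qed
qed

lemma uniform_limit_summable_steps:
  fixes f :: "nat \<Rightarrow> 'a \<Rightarrow> 'x::{real_normed_vector,polish_space}"
  assumes steps: "\<And>n x. norm (f (Suc n) x - f n x) \<le> M n" and "summable M"
  obtains l where "uniform_limit UNIV f l sequentially"
proof -
  define F where "F n x = (f n x, 0::real)" for n x
  have "uniform_limit UNIV (\<lambda>n x. \<Sum>i<n. F (Suc i) x - F i x) (\<lambda>x. \<Sum>i. F (Suc i) x - F i x) sequentially"
    using steps \<open>summable M\<close> by (intro Weierstrass_m_test) (auto simp: F_def norm_Pair)
  then have "uniform_limit UNIV (\<lambda>n x. F 0 x + (\<Sum>i<n. F (Suc i) x - F i x))
      (\<lambda>x. F 0 x + (\<Sum>i. F (Suc i) x - F i x)) sequentially"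
    by (intro uniform_limit_intros)
  then have "uniform_limit UNIV F (\<lambda>x. F 0 x + (\<Sum>i. F (Suc i) x - F i x)) sequentially"
    by (simp add: sum_lessThan_telescope[of "\<lambda>i. F i _"])
  from bounded_linear.uniform_limit[OF bounded_linear_fst this]
  show ?thesis by (intro that) (simp add: F_def)
qed

lemma set_integral_nonneg_subset_le:
  fixes f :: "'a \<Rightarrow> real"
  assumes "set_integrable M B f" "A \<in> sets M" "A \<subseteq> B" "\<And>x. 0 \<le> f x"
  shows "(LINT x:A|M. f x) \<le> (LINT x:B|M. f x)"
  unfolding set_lebesgue_integral_def
proof (rule integral_mono)
  show "integrable M (\<lambda>x. indicator A x *\<^sub>R f x)"
    using set_integrable_subset[OF assms(1-3)] unfolding set_integrable_def .
  show "integrable M (\<lambda>x. indicator B x *\<^sub>R f x)"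
    using assms(1) unfolding set_integrable_def .
  show "indicator A x *\<^sub>R f x \<le> indicator B x *\<^sub>R f x" for x
    using assms(3) assms(4)[of x] by (auto simp: indicator_def)
qed

lemma set_integrable_const_atLeastAtMost: "set_integrable lborel {a..b::real} (\<lambda>_. c :: real)"
  by (rule borel_integrable_atLeastAtMost') (intro continuous_intros)

lemma set_integral_exp_affine:
  fixes L t :: real
  assumes "L > 0" "0 \<le> t"
  shows "(LINT s:{0..t}|lborel. exp (2 * L * s)) = (exp (2 * L * t) - 1) / (2 * L)"
proof -
  have "integral\<^sup>L lborel (\<lambda>x. indicator {0 .. t} x *\<^sub>R exp (2 * L * x))
        = exp (2 * L * t) / (2 * L) - exp (2 * L * 0) / (2 * L)"
  proof (rule integral_FTC_atLeastAtMost[OF assms(2)])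
    fix x :: real
    have "((\<lambda>x. exp (2 * L * x) / (2 * L)) has_real_derivative exp (2 * L * x)) (at x)"
      using assms(1) by (auto intro!: derivative_eq_intros)
    then show "((\<lambda>x. exp (2 * L * x) / (2 * L)) has_vector_derivative exp (2 * L * x)) (at x within {0..t})"
      by (simp add: has_real_derivative_iff_has_vector_derivative has_vector_derivative_at_within)
  qed (intro continuous_intros)
  then show ?thesis unfolding set_lebesgue_integral_def by (simp add: diff_divide_distrib)
qed

lemma set_integral_power2_le:
  fixes f :: "real \<Rightarrow> real"
  assumes T: "T > 0" and f1: "set_integrable lborel {0..T} f"
    and f2: "set_integrable lborel {0..T} (\<lambda>t. (f t)\<^sup>2)"
  shows "(LINT t:{0..T}|lborel. f t)\<^sup>2 \<le> T * (LINT t:{0..T}|lborel. (f t)\<^sup>2)"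
proof -
  define I1 where "I1 = (LINT t:{0..T}|lborel. f t)"
  define I2 where "I2 = (LINT t:{0..T}|lborel. (f t)\<^sup>2)"
  define a where "a = I1 / T"
  have "0 \<le> (LINT t:{0..T}|lborel. (f t - a)\<^sup>2)"
    unfolding set_lebesgue_integral_def by (intro integral_nonneg_AE) (auto simp: indicator_def)
  also have "(\<lambda>t. (f t - a)\<^sup>2) = (\<lambda>t. ((f t)\<^sup>2 - (2 * a) * f t) + a\<^sup>2)"
    by (auto simp: power2_eq_square algebra_simps)
  also have "(LINT t:{0..T}|lborel. ((f t)\<^sup>2 - (2 * a) * f t) + a\<^sup>2) = I2 - 2 * a * I1 + T * a\<^sup>2"
    using f1 f2 set_integrable_const_atLeastAtMost T
    by (simp add: I1_def I2_def set_integral_add set_integral_diff set_integrable_mult_right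
        set_integral_const)
  finally have "0 \<le> I2 - 2 * a * I1 + T * a\<^sup>2" .
  moreover have "2 * a * I1 - T * a\<^sup>2 = I1\<^sup>2 / T"
    unfolding a_def using T by (simp add: power2_eq_square field_simps)
  ultimately have "I1\<^sup>2 / T \<le> I2" by linarith
  then show ?thesis unfolding I1_def[symmetric] I2_def[symmetric] using T by (simp add: field_simps)
qed

lemma power2_add_le: "((a::real) + b)\<^sup>2 \<le> 2 * a\<^sup>2 + 2 * b\<^sup>2"
  using zero_le_power2[of "a - b"] by (simp add: power2_eq_square algebra_simps)

lemma set_integrable_norm_diff_power2:
  fixes f g :: "'a \<Rightarrow> 'b::{real_normed_vector,polish_space}"
  assumes f: "set_borel_measurable M A f" and g: "set_borel_measurable M A g"
    and f2: "set_integrable M A (\<lambda>x. (norm (f x))\<^sup>2)" and g2: "set_integrable M A (\<lambda>x. (norm (g x))\<^sup>2)"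
  shows "set_integrable M A (\<lambda>x. (norm (f x - g x))\<^sup>2)"
proof -
  have "set_integrable M A (\<lambda>x. 2 * (norm (f x))\<^sup>2 + 2 * (norm (g x))\<^sup>2)"
    using f2 g2 by (intro set_integral_add(1) set_integrable_mult_right)
  then show ?thesis
  proof (rule set_integrable_bound)
    have "(\<lambda>x. (norm (indicator A x *\<^sub>R f x - indicator A x *\<^sub>R g x))\<^sup>2) \<in> borel_measurable M"
      using f g unfolding set_borel_measurable_def by measurable
    moreover have "(\<lambda>x. (norm (indicator A x *\<^sub>R f x - indicator A x *\<^sub>R g x))\<^sup>2)
        = (\<lambda>x. indicator A x *\<^sub>R (norm (f x - g x))\<^sup>2)"
      by (auto simp: indicator_def)
    ultimately show "set_borel_measurable M A (\<lambda>x. (norm (f x - g x))\<^sup>2)"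
      unfolding set_borel_measurable_def by simp
    have "(norm (f x - g x))\<^sup>2 \<le> 2 * (norm (f x))\<^sup>2 + 2 * (norm (g x))\<^sup>2" for x
      using order_trans[OF power_mono[OF norm_triangle_ineq4[of "f x" "g x"] norm_ge_zero] power2_add_le] .
    then show "AE x in M. x \<in> A \<longrightarrow>
        norm ((norm (f x - g x))\<^sup>2) \<le> norm (2 * (norm (f x))\<^sup>2 + 2 * (norm (g x))\<^sup>2)"
      by (intro AE_I2) auto
  qed
qed

section \<open>Quadratic functionals\<close>

definition has_curvature :: "('a::real_vector \<Rightarrow> real) \<Rightarrow> ('a \<Rightarrow> real) \<Rightarrow> bool" where
  "has_curvature J Q \<longleftrightarrow>
     (\<forall>p q u. J ((1 - u) *\<^sub>R p + u *\<^sub>R q) = (1 - u) * J p + u * J q - u * (1 - u) * Q (p - q))"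

lemma has_curvatureD:
  "has_curvature J Q \<Longrightarrow> J ((1 - u) *\<^sub>R p + u *\<^sub>R q) = (1 - u) * J p + u * J q - u * (1 - u) * Q (p - q)"
  unfolding has_curvature_def by blast

lemma strict_convex_on_if_curvature_pos:
  assumes J: "has_curvature J Q" and Q: "\<And>h. h \<noteq> 0 \<Longrightarrow> Q h > 0"
  shows "strict_convex_on UNIV J"
  unfolding strict_convex_on_def
proof (intro conjI ballI impI allI)
  fix p q :: 'a and u :: real
  assume "p \<noteq> q" and u: "0 < u \<and> u < 1"
  then have "u * (1 - u) * Q (p - q) > 0" using Q[of "p - q"] by simp
  then show "J ((1 - u) *\<^sub>R p + u *\<^sub>R q) < (1 - u) * J p + u * J q"
    using has_curvatureD[OF J, of u p q] by linarith
qed simp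

text \<open>Write \<open>y\<close> as the convex combination, with weight \<open>\<parallel>y - x\<parallel>\<close>, of \<open>x\<close> and a point at
  distance \<open>1\<close> from \<open>x\<close>; the curvature term then costs at most \<open>\<parallel>y - x\<parallel> \<bar>M\<bar>\<close>.\<close>

lemma has_curvature_segment_lower:
  fixes J :: "'a::real_normed_vector \<Rightarrow> real"
  assumes J: "has_curvature J Q" and Q: "\<And>h. Q h \<le> M * (norm h)\<^sup>2" and b: "\<And>p. b \<le> J p"
    and d: "0 < norm (y - x)" "norm (y - x) \<le> 1"
  shows "(1 - norm (y - x)) * J x + norm (y - x) * b - norm (y - x) * \<bar>M\<bar> \<le> J y"
proof -
  define d where "d = norm (y - x)"
  define z where "z = x + (1 / d) *\<^sub>R (y - x)"
  have d0: "0 < d" "d \<le> 1" using d by (auto simp: d_def)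
  have y: "(1 - d) *\<^sub>R x + d *\<^sub>R z = y" using d0 by (simp add: z_def algebra_simps)
  have "norm (x - z) = 1" using d0 by (simp add: z_def d_def)
  then have "Q (x - z) \<le> \<bar>M\<bar>" using Q[of "x - z"] by simp
  then have "(1 - d) * Q (x - z) \<le> (1 - d) * \<bar>M\<bar>" using d0 by (intro mult_left_mono) auto
  also have "\<dots> \<le> \<bar>M\<bar>" using d0 by (simp add: mult_left_le_one_le)
  finally have "d * (1 - d) * Q (x - z) \<le> d * \<bar>M\<bar>"
    using d0 mult_left_mono[of "(1 - d) * Q (x - z)" "\<bar>M\<bar>" d] by (simp add: mult_ac)
  moreover have "d * b \<le> d * J z" using b[of z] d0 by simp
  moreover have "J y = (1 - d) * J x + d * J z - d * (1 - d) * Q (x - z)"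
    using has_curvatureD[OF J, of d x z] y by simp
  ultimately show ?thesis unfolding d_def[symmetric] by linarith
qed

lemma has_curvature_lipschitz_near:
  fixes J :: "'a::real_normed_vector \<Rightarrow> real"
  assumes J: "has_curvature J Q" and Q: "\<And>h. Q h \<le> M * (norm h)\<^sup>2" and b: "\<And>p. b \<le> J p"
    and near: "norm (y - x) \<le> 1/2"
  shows "\<bar>J y - J x\<bar> \<le> 3 * (\<bar>J x\<bar> + \<bar>b\<bar> + \<bar>M\<bar>) * norm (y - x)"
proof (cases "y = x")
  case False
  define d where "d = norm (y - x)"
  define R where "R = \<bar>J x\<bar> + \<bar>b\<bar> + \<bar>M\<bar>"
  have d0: "0 < d" "d \<le> 1/2" using False near by (auto simp: d_def)
  have lower: "(1 - d) * J x + d * b - d * \<bar>M\<bar> \<le> J y"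
    using has_curvature_segment_lower[OF J Q b, of y x] d0 by (simp add: d_def)
  have upper: "(1 - d) * J y + d * b - d * \<bar>M\<bar> \<le> J x"
    using has_curvature_segment_lower[OF J Q b, of x y] d0 by (simp add: d_def norm_minus_commute)
  have "J x - J y \<le> d * R"
  proof -
    have "d * (J x - b + \<bar>M\<bar>) \<le> d * R"
      using d0 by (intro mult_left_mono) (auto simp: R_def)
    with lower show ?thesis by (simp add: algebra_simps)
  qed
  moreover have "J y - J x \<le> 3 * R * d"
  proof -
    have "- (d * b) \<le> \<bar>b\<bar>" and "d * \<bar>M\<bar> \<le> \<bar>M\<bar>"
      using d0 mult_left_le_one_le[of "\<bar>b\<bar>" d] mult_left_le_one_le[of "\<bar>M\<bar>" d]
        abs_ge_minus_self[of "d * b"] by (auto simp: abs_mult)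
    then have bound: "(1 - d) * J y \<le> R" using upper abs_ge_self[of "J x"] unfolding R_def by linarith
    have "J y \<le> 2 * R"
    proof (cases "J y > 0")
      case True
      then have "J y \<le> 2 * ((1 - d) * J y)" using d0 mult_right_mono[of "1/2" "1 - d" "J y"] by simp
      with bound show ?thesis by linarith
    qed (simp add: R_def)
    then have "d * (J y - b + \<bar>M\<bar>) \<le> d * (3 * R)"
      using d0 by (intro mult_left_mono) (auto simp: R_def)
    with upper show ?thesis by (simp add: algebra_simps)
  qed
  ultimately show ?thesis unfolding d_def[symmetric] R_def[symmetric] by (simp add: abs_le_iff mult_ac)
qed simp

lemma continuous_on_if_curvature_bounded:
  fixes J :: "'a::real_normed_vector \<Rightarrow> real"
  assumes J: "has_curvature J Q" and Q: "\<And>h. Q h \<le> M * (norm h)\<^sup>2" and b: "\<And>p. b \<le> J p"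
  shows "continuous_on UNIV J"
  unfolding continuous_on_iff
proof (intro ballI allI impI)
  fix x and e :: real assume "e > 0"
  define R where "R = 3 * (\<bar>J x\<bar> + \<bar>b\<bar> + \<bar>M\<bar>) + 1"
  have "R > 0" unfolding R_def by (simp add: add_nonneg_pos)
  show "\<exists>d>0. \<forall>y\<in>UNIV. dist y x < d \<longrightarrow> dist (J y) (J x) < e"
  proof (intro exI conjI ballI impI)
    show "min (1/2) (e / R) > 0" using \<open>e > 0\<close> \<open>R > 0\<close> by simp
    fix y assume "dist y x < min (1/2) (e / R)"
    then have near: "norm (y - x) \<le> 1/2" and small: "R * norm (y - x) < e"
      using \<open>R > 0\<close> by (auto simp: dist_norm field_simps)
    have "\<bar>J y - J x\<bar> \<le> (R - 1) * norm (y - x)"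
      using has_curvature_lipschitz_near[OF J Q b near] by (simp add: R_def)
    also have "\<dots> \<le> R * norm (y - x)" by (simp add: mult_right_mono)
    finally show "dist (J y) (J x) < e" using small by (simp add: dist_real_def)
  qed
qed

lemma has_curvature_midpoint_le:
  assumes J: "has_curvature J Q" and m: "\<And>p. m \<le> J p" and c: "\<And>h. c * (norm h)\<^sup>2 \<le> Q h"
  shows "c * (norm (p - q))\<^sup>2 \<le> 2 * J p + 2 * J q - 4 * m"
proof -
  have "m \<le> (1 - 1/2) * J p + 1/2 * J q - 1/2 * (1 - 1/2) * Q (p - q)"
    using m[of "(1 - 1/2) *\<^sub>R p + (1/2) *\<^sub>R q"] has_curvatureD[OF J, of "1/2" p q] by linarith
  then show ?thesis using c[of "p - q"] by (simp add: field_simps)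
qed

lemma Cauchy_if_curvature_coercive:
  fixes ps :: "nat \<Rightarrow> 'a::real_normed_vector"
  assumes J: "has_curvature J Q" and c: "c > 0" "\<And>h. c * (norm h)\<^sup>2 \<le> Q h"
    and m: "\<And>p. m \<le> J p" and lim: "(\<lambda>n. J (ps n)) \<longlonglongrightarrow> m"
  shows "Cauchy ps"
proof (rule metric_CauchyI)
  fix e :: real assume "e > 0"
  define r where "r = c * e\<^sup>2"
  with c(1) \<open>e > 0\<close> have "m < m + r / 4" by simp
  from order_tendstoD(2)[OF lim this] obtain N where N: "\<And>n. n \<ge> N \<Longrightarrow> J (ps n) < m + r / 4"
    by (auto simp: eventually_sequentially)
  show "\<exists>M. \<forall>i\<ge>M. \<forall>j\<ge>M. dist (ps i) (ps j) < e"
  proof (intro exI allI impI)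
    fix i j assume "i \<ge> N" "j \<ge> N"
    have "c * (norm (ps i - ps j))\<^sup>2 \<le> 2 * J (ps i) + 2 * J (ps j) - 4 * m"
      by (rule has_curvature_midpoint_le[OF J m c(2)])
    also have "\<dots> < r" using N[OF \<open>i \<ge> N\<close>] N[OF \<open>j \<ge> N\<close>] by linarith
    also have "r = c * e\<^sup>2" by (rule r_def)
    finally have "norm (ps i - ps j) < e"
      using c(1) \<open>e > 0\<close> by (simp add: power_less_imp_less_base)
    then show "dist (ps i) (ps j) < e" by (simp add: dist_norm)
  qed
qed

lemma ex1_minimizer_if_curvature_coercive:
  fixes J :: "'a::banach \<Rightarrow> real"
  assumes J: "has_curvature J Q" and c: "c > 0" "\<And>h. c * (norm h)\<^sup>2 \<le> Q h"
    and b: "\<And>p. b \<le> J p" and cont: "continuous_on UNIV J"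
  shows "\<exists>!p. \<forall>q. J p \<le> J q"
proof -
  define m where "m = Inf (range J)"
  have bdd: "bdd_below (range J)" using b by (intro bdd_belowI[of _ b]) auto
  have m_le: "m \<le> J p" for p unfolding m_def using bdd by (intro cInf_lower) auto
  have "\<exists>p. J p < m + 1 / Suc n" for n :: nat
    using cInf_less_iff[OF _ bdd, of "m + 1 / Suc n"] unfolding m_def by auto
  then obtain ps where ps: "\<And>n. J (ps n) < m + 1 / Suc n" by metis
  have "(\<lambda>n. J (ps n)) \<longlonglongrightarrow> m"
  proof (rule tendsto_sandwich)
    show "\<forall>\<^sub>F n in sequentially. m \<le> J (ps n)" by (simp add: m_le)
    show "\<forall>\<^sub>F n in sequentially. J (ps n) \<le> m + 1 / Suc n" using ps by (simp add: less_imp_le)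
    show "(\<lambda>n. m + 1 / real (Suc n)) \<longlonglongrightarrow> m"
      using tendsto_add[OF tendsto_const lim_1_over_n[THEN LIMSEQ_Suc], of m] by simp
  qed simp
  moreover from this have "Cauchy ps" by (rule Cauchy_if_curvature_coercive[OF J c m_le])
  then obtain p where "ps \<longlonglongrightarrow> p" using Cauchy_convergent convergent_def by blast
  with cont have "(\<lambda>n. J (ps n)) \<longlonglongrightarrow> J p"
    by (metis continuous_on_eq_continuous_at isCont_tendsto_compose open_UNIV UNIV_I)
  ultimately have "J p = m" by (rule LIMSEQ_unique[rotated])
  then have min: "\<forall>q. J p \<le> J q" using m_le by simp
  show ?thesis
  proof (rule ex1I[of _ p])
    fix p' assume min': "\<forall>q. J p' \<le> J q"
    have "c * (norm (p' - p))\<^sup>2 \<le> 2 * J p' + 2 * J p - 4 * J p'"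
      using min' by (intro has_curvature_midpoint_le[OF J _ c(2)]) auto
    also have "\<dots> \<le> 0" using min'[rule_format, of p] min[rule_format, of p'] by linarith
    finally show "p' = p" using c(1) by (simp add: mult_le_0_iff)
  qed (rule min)
qed

lemma norm_convex_combination_power2:
  fixes a b :: "'a::real_inner"
  shows "(norm ((1 - u) *\<^sub>R a + u *\<^sub>R b))\<^sup>2
    = (1 - u) * (norm a)\<^sup>2 + u * (norm b)\<^sup>2 - u * (1 - u) * (norm (a - b))\<^sup>2"
  by (simp add: power2_norm_eq_inner inner_add_left inner_add_right inner_diff_left inner_diff_right
      inner_commute[of b a] algebra_simps)

lemma inner_blinfun_convex_combination:
  fixes a b :: "'a::real_inner" and U :: "'a \<Rightarrow>\<^sub>L 'a"
  shows "inner ((1 - u) *\<^sub>R a + u *\<^sub>R b) (U ((1 - u) *\<^sub>R a + u *\<^sub>R b))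
     = (1 - u) * inner a (U a) + u * inner b (U b) - u * (1 - u) * inner (a - b) (U (a - b))"
  by (simp add: blinfun.add_right blinfun.scaleR_right blinfun.diff_right inner_add_left inner_add_right
      inner_diff_left inner_diff_right algebra_simps)

lemma le_1_plus_power2: "(x::real) \<le> 1 + x\<^sup>2"
  using zero_le_power2[of "x - 1/2"] by (simp add: power2_eq_square algebra_simps)

lemma norm_prod_power2: "(norm h)\<^sup>2 = (norm (fst h))\<^sup>2 + (norm (snd h))\<^sup>2"
  by (cases h) (simp add: norm_Pair)

section \<open>Mild solutions of bounded perturbations\<close>

text \<open>The hypothesis is what one Picard step yields; applied at a maximizer of
  \<open>exp (-2 L t) \<parallel>w t\<parallel>\<close> it bounds that weighted supremum by \<open>2 N\<close>.\<close>

lemma gronwall_exp_weight: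
  fixes w :: "real \<Rightarrow> 'x::real_normed_vector"
  assumes L: "L > 0" and N: "N \<ge> 0" and T: "T \<ge> 0" and w: "continuous_on {0..T} w"
    and step: "\<And>t c. t \<in> {0..T} \<Longrightarrow> c \<ge> 0 \<Longrightarrow> (\<forall>s\<in>{0..t}. norm (w s) \<le> c * exp (2 * L * s))
          \<Longrightarrow> norm (w t) \<le> N + c * exp (2 * L * t) / 2"
    and t: "t \<in> {0..T}"
  shows "norm (w t) \<le> 2 * N * exp (2 * L * T)"
proof -
  define f where "f t = exp (- (2 * L * t)) * norm (w t)" for t
  have norm_w: "norm (w s) = exp (2 * L * s) * f s" for s
    unfolding f_def by (simp add: exp_minus_inverse mult.assoc[symmetric])
  have "continuous_on {0..T} f" unfolding f_def using w by (intro continuous_intros)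
  then obtain t0 where t0: "t0 \<in> {0..T}" and max: "\<And>s. s \<in> {0..T} \<Longrightarrow> f s \<le> f t0"
    using continuous_attains_sup[of "{0..T}" f] T by auto
  have m0: "f t0 \<ge> 0" unfolding f_def by simp
  have bound: "norm (w s) \<le> f t0 * exp (2 * L * s)" if "s \<in> {0..T}" for s
    using max[OF that] by (simp add: norm_w mult.commute)
  have "exp (2 * L * t0) * f t0 \<le> N + f t0 * exp (2 * L * t0) / 2"
    using step[OF t0 m0] bound t0 by (auto simp: norm_w)
  moreover have "exp (2 * L * t0) \<ge> 1" using L t0 by auto
  ultimately have "f t0 \<le> 2 * N"
    using m0 mult_left_mono[of 1 "exp (2 * L * t0)" "f t0"] by (simp add: mult.commute)
  have "norm (w t) \<le> f t0 * exp (2 * L * t)" by (rule bound[OF t])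
  also have "\<dots> \<le> 2 * N * exp (2 * L * T)"
    using \<open>f t0 \<le> 2 * N\<close> m0 t L by (intro mult_mono) auto
  finally show ?thesis .
qed

lemma tendsto_indicator_atLeastAtMost:
  fixes u :: "nat \<Rightarrow> real"
  assumes "u \<longlonglongrightarrow> a" "s \<noteq> a"
  shows "(\<lambda>n. indicator {0..u n} s :: real) \<longlonglongrightarrow> indicator {0..a} s"
proof (cases "0 \<le> s")
  case nonneg: True
  have "eventually (\<lambda>n. indicator {0..u n} s = (indicator {0..a} s :: real)) sequentially"
  proof (cases "s < a")
    case True
    from order_tendstoD(1)[OF assms(1) True] show ?thesis
      by (rule eventually_mono) (use nonneg True in \<open>auto simp: indicator_def\<close>)
  next
    case False
    with assms(2) have "a < s" by auto
    from order_tendstoD(2)[OF assms(1) this] show ?thesis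
      by (rule eventually_mono) (use \<open>a < s\<close> in \<open>auto simp: indicator_def\<close>)
  qed
  then show ?thesis by (rule tendsto_eventually)
qed (simp add: indicator_def)

locale contraction_family =
  fixes S :: "real \<Rightarrow> ('x::{real_normed_vector,polish_space} \<Rightarrow>\<^sub>L 'x)" and T :: real
  assumes T_pos: "T > 0"
    and strongly_continuous: "\<And>x. continuous_on {0..} (\<lambda>t. S t x)"
    and norm_S_le_1: "\<And>t. 0 \<le> t \<Longrightarrow> norm (S t) \<le> 1"
begin

definition integrable_forcing :: "(real \<Rightarrow> 'x) \<Rightarrow> bool" where
  "integrable_forcing g \<longleftrightarrow>
     g \<in> borel_measurable lborel \<and> set_integrable lborel {0..T} (\<lambda>s. norm (g s))"

definition duhamel :: "(real \<Rightarrow> 'x) \<Rightarrow> real \<Rightarrow> 'x" where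
  "duhamel g t = (LINT s:{0..t}|lborel. S (t - s) (g s))"

lemma norm_S_apply_le: "0 \<le> r \<Longrightarrow> norm (S r a) \<le> norm a"
  using norm_blinfun[of "S r" a] norm_S_le_1[of r] mult_right_mono[of "norm (S r)" 1 "norm a"]
  by (simp add: order_trans)

text \<open>\<open>S\<close> is unspecified at negative times; clamping the time argument at \<open>0\<close> gives a function
  continuous on all of \<open>\<real>\<close>.\<close>

lemma continuous_on_S_clamped: "continuous_on UNIV (\<lambda>r. S (max 0 r) a)"
  by (rule continuous_on_compose2[OF strongly_continuous[of a]]) (auto intro: continuous_intros)

lemma borel_measurable_duhamel_integrand:
  assumes "g \<in> borel_measurable lborel"
  shows "(\<lambda>s. indicator {0..t} s *\<^sub>R S (t - s) (g s)) \<in> borel_measurable lborel"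
proof -
  have "continuous_on UNIV (\<lambda>s. S (max 0 (t - s)) a)" for a
    by (rule continuous_on_compose2[OF continuous_on_S_clamped]) (auto intro: continuous_intros)
  then have "(\<lambda>s. S (max 0 (t - s)) a) \<in> borel_measurable lborel" for a
    using borel_measurable_continuous_onI by (simp add: measurable_lborel1) blast
  moreover have "(\<lambda>s. indicator {0..t} s *\<^sub>R g s) \<in> borel_measurable lborel"
    using assms by measurable
  ultimately have "(\<lambda>s. S (max 0 (t - s)) (indicator {0..t} s *\<^sub>R g s)) \<in> borel_measurable lborel"
    by (rule borel_measurable_blinfun_apply_pointwise)
  moreover have "S (max 0 (t - s)) (indicator {0..t} s *\<^sub>R g s) = indicator {0..t} s *\<^sub>R S (t - s) (g s)" for s
    by (cases "s \<in> {0..t}") (auto simp: blinfun.scaleR_right max_def)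
  ultimately show ?thesis by simp
qed

lemma set_integrable_norm_forcing:
  assumes "integrable_forcing g" "t \<le> T"
  shows "set_integrable lborel {0..t} (\<lambda>s. norm (g s))"
  by (rule set_integrable_subset[where A="{0..T}"]) (use assms in \<open>auto simp: integrable_forcing_def\<close>)

lemma set_integrable_duhamel:
  assumes "integrable_forcing g" "t \<le> T"
  shows "set_integrable lborel {0..t} (\<lambda>s. S (t - s) (g s))"
  unfolding set_integrable_def
proof (rule integrable_bound_polish)
  show "integrable lborel (\<lambda>s. indicator {0..t} s *\<^sub>R norm (g s))"
    using set_integrable_norm_forcing[OF assms] unfolding set_integrable_def .
  show "(\<lambda>s. indicator {0..t} s *\<^sub>R S (t - s) (g s)) \<in> borel_measurable lborel"
    using assms(1) unfolding integrable_forcing_def by (intro borel_measurable_duhamel_integrand) auto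
  show "AE s in lborel. norm (indicator {0..t} s *\<^sub>R S (t - s) (g s)) \<le> indicator {0..t} s *\<^sub>R norm (g s)"
    by (intro AE_I2) (auto simp: indicator_def norm_S_apply_le)
qed

lemma norm_duhamel_le:
  assumes "integrable_forcing g" "t \<le> T"
  shows "norm (duhamel g t) \<le> (LINT s:{0..t}|lborel. norm (g s))"
proof -
  have "norm (duhamel g t) \<le> (\<integral>s. norm (indicator {0..t} s *\<^sub>R S (t - s) (g s)) \<partial>lborel)"
    unfolding duhamel_def set_lebesgue_integral_def by (rule integral_norm_bound_polish)
  also have "\<dots> \<le> (\<integral>s. indicator {0..t} s *\<^sub>R norm (g s) \<partial>lborel)"
  proof (rule integral_mono)
    show "integrable lborel (\<lambda>s. norm (indicator {0..t} s *\<^sub>R S (t - s) (g s)))"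
      using set_integrable_duhamel[OF assms] unfolding set_integrable_def by (rule integrable_norm_polish)
    show "integrable lborel (\<lambda>s. indicator {0..t} s *\<^sub>R norm (g s))"
      using set_integrable_norm_forcing[OF assms] unfolding set_integrable_def .
  qed (auto simp: indicator_def norm_S_apply_le)
  finally show ?thesis unfolding set_lebesgue_integral_def .
qed

lemma norm_duhamel_le_total:
  assumes "integrable_forcing g" "t \<in> {0..T}"
  shows "norm (duhamel g t) \<le> (LINT s:{0..T}|lborel. norm (g s))"
proof -
  have "norm (duhamel g t) \<le> (LINT s:{0..t}|lborel. norm (g s))"
    using assms by (intro norm_duhamel_le) auto
  also have "\<dots> \<le> (LINT s:{0..T}|lborel. norm (g s))"
    by (rule set_integral_nonneg_subset_le) (use assms in \<open>auto simp: integrable_forcing_def\<close>)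
  finally show ?thesis .
qed

lemma integrable_forcing_add:
  assumes f: "integrable_forcing f" and g: "integrable_forcing g"
  shows "integrable_forcing (\<lambda>s. f s + g s)"
proof -
  have m: "(\<lambda>s. f s + g s) \<in> borel_measurable lborel"
    using f g by (auto simp: integrable_forcing_def)
  have "integrable lborel (\<lambda>s. indicator {0..T} s *\<^sub>R norm (f s + g s))"
  proof (rule Bochner_Integration.integrable_bound)
    show "integrable lborel (\<lambda>s. indicator {0..T} s *\<^sub>R norm (f s) + indicator {0..T} s *\<^sub>R norm (g s))"
      using f g unfolding integrable_forcing_def set_integrable_def by auto
    show "(\<lambda>s. indicator {0..T} s *\<^sub>R norm (f s + g s)) \<in> borel_measurable lborel"
      using m by measurable
  qed (intro AE_I2, auto simp: indicator_def norm_triangle_ineq)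
  with m show ?thesis unfolding integrable_forcing_def set_integrable_def by simp
qed

lemma integrable_forcing_scaleR: "integrable_forcing f \<Longrightarrow> integrable_forcing (\<lambda>s. c *\<^sub>R f s)"
  unfolding integrable_forcing_def set_integrable_def by (auto simp: mult.left_commute[of _ "\<bar>c\<bar>"])

lemma integrable_forcing_diff:
  "integrable_forcing f \<Longrightarrow> integrable_forcing g \<Longrightarrow> integrable_forcing (\<lambda>s. f s - g s)"
  using integrable_forcing_add[of f "\<lambda>s. (-1) *\<^sub>R g s"] integrable_forcing_scaleR[of g "-1"] by simp

lemma integrable_forcing_blinfun_apply:
  assumes f: "integrable_forcing f"
  shows "integrable_forcing (\<lambda>s. blinfun_apply P (f s))"
proof -
  have m: "(\<lambda>s. P (f s)) \<in> borel_measurable lborel"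
    using f borel_measurable_continuous_on[OF linear_continuous_on[OF blinfun.bounded_linear_right]]
    by (auto simp: integrable_forcing_def measurable_lborel1)
  have "integrable lborel (\<lambda>s. indicator {0..T} s *\<^sub>R norm (P (f s)))"
  proof (rule Bochner_Integration.integrable_bound)
    show "integrable lborel (\<lambda>s. norm P * (indicator {0..T} s *\<^sub>R norm (f s)))"
      using f unfolding integrable_forcing_def set_integrable_def by auto
    show "(\<lambda>s. indicator {0..T} s *\<^sub>R norm (P (f s))) \<in> borel_measurable lborel"
      using m by measurable
  qed (intro AE_I2, auto simp: indicator_def norm_blinfun)
  with m show ?thesis unfolding integrable_forcing_def set_integrable_def by simp
qed

lemma duhamel_add:
  assumes "integrable_forcing f" "integrable_forcing g" "t \<le> T"
  shows "duhamel (\<lambda>s. f s + g s) t = duhamel f t + duhamel g t"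
  using set_integrable_duhamel[of f t] set_integrable_duhamel[of g t] assms
  unfolding duhamel_def set_lebesgue_integral_def set_integrable_def
  by (simp add: blinfun.add_right scaleR_add_right)

lemma duhamel_scaleR: "duhamel (\<lambda>s. c *\<^sub>R f s) t = c *\<^sub>R duhamel f t"
proof -
  have eq: "(\<lambda>s. indicator {0..t} s *\<^sub>R S (t - s) (c *\<^sub>R f s))
      = (\<lambda>s. c *\<^sub>R (indicator {0..t} s *\<^sub>R S (t - s) (f s)))"
    by (auto simp: blinfun.scaleR_right)
  show ?thesis
    unfolding duhamel_def set_lebesgue_integral_def eq by (rule integral_scaleR_right)
qed

lemma duhamel_diff:
  assumes "integrable_forcing f" "integrable_forcing g" "t \<le> T"
  shows "duhamel (\<lambda>s. f s - g s) t = duhamel f t - duhamel g t"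
  using duhamel_add[of f "\<lambda>s. (-1) *\<^sub>R g s" t] integrable_forcing_scaleR[of g "-1"]
    duhamel_scaleR[of "-1" g t] assms
  by simp

lemma continuous_on_duhamel:
  assumes g: "integrable_forcing g"
  shows "continuous_on {0..T} (duhamel g)"
proof (rule continuous_on_sequentiallyI)
  define h where "h t s = indicator {0..t} s *\<^sub>R S (max 0 (t - s)) (g s)" for t s
  have h_eq: "(\<lambda>s. indicator {0..t} s *\<^sub>R S (t - s) (g s)) = h t" for t
    unfolding h_def by (auto simp: indicator_def max_def)
  have h_meas: "h t \<in> borel_measurable lborel" for t
    using borel_measurable_duhamel_integrand[of g t] g unfolding integrable_forcing_def h_eq by auto
  fix u a assume u: "\<forall>n. u n \<in> {0..T}" and "a \<in> {0..T}" and ua: "u \<longlonglongrightarrow> a"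
  have "(\<lambda>n. integral\<^sup>L lborel (h (u n))) \<longlonglongrightarrow> integral\<^sup>L lborel (h a)"
  proof (rule integral_dominated_convergence_polish[OF h_meas h_meas])
    show "integrable lborel (\<lambda>s. indicator {0..T} s *\<^sub>R norm (g s))"
      using g unfolding integrable_forcing_def set_integrable_def by auto
    show "AE s in lborel. (\<lambda>n. h (u n) s) \<longlonglongrightarrow> h a s"
      using AE_lborel_singleton[of a]
    proof eventually_elim
      case (elim s)
      have "isCont (\<lambda>t. S (max 0 t) (g s)) (a - s)"
        using continuous_on_S_clamped continuous_on_eq_continuous_at by blast
      then have "(\<lambda>n. S (max 0 (u n - s)) (g s)) \<longlonglongrightarrow> S (max 0 (a - s)) (g s)"
        by (rule isCont_tendsto_compose) (intro tendsto_diff ua tendsto_const)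
      with tendsto_indicator_atLeastAtMost[OF ua elim] show ?case
        unfolding h_def by (rule tendsto_scaleR)
    qed
    show "AE s in lborel. norm (h (u n) s) \<le> indicator {0..T} s *\<^sub>R norm (g s)" for n
      using u[rule_format, of n] by (intro AE_I2) (auto simp: h_def indicator_def norm_S_apply_le)
  qed
  then show "(\<lambda>n. duhamel g (u n)) \<longlonglongrightarrow> duhamel g a"
    unfolding duhamel_def set_lebesgue_integral_def h_eq .
qed

lemma norm_duhamel_exp_bound:
  assumes L: "L > 0" and c: "c \<ge> 0" and g: "integrable_forcing g" and t: "0 \<le> t" "t \<le> T"
    and bound: "\<And>s. s \<in> {0..t} \<Longrightarrow> norm (g s) \<le> c * exp (2 * L * s)"
  shows "norm (duhamel g t) \<le> c * exp (2 * L * t) / (2 * L)"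
proof -
  have "norm (duhamel g t) \<le> (LINT s:{0..t}|lborel. norm (g s))" by (rule norm_duhamel_le[OF g t(2)])
  also have "\<dots> \<le> (LINT s:{0..t}|lborel. c * exp (2 * L * s))"
  proof (rule set_integral_mono[OF set_integrable_norm_forcing[OF g t(2)] _ bound])
    show "set_integrable lborel {0..t} (\<lambda>s. c * exp (2 * L * s))"
      by (rule borel_integrable_atLeastAtMost') (intro continuous_intros)
  qed
  also have "\<dots> = c * ((exp (2 * L * t) - 1) / (2 * L))"
    using set_integral_exp_affine[OF L t(1)] by simp
  also have "\<dots> \<le> c * exp (2 * L * t) / (2 * L)"
    using L c by (simp add: divide_right_mono mult_left_mono)
  finally show ?thesis .
qed

end

locale perturbed_mild_equation = contraction_family S T
  for S :: "real \<Rightarrow> ('x::{real_normed_vector,polish_space} \<Rightarrow>\<^sub>L 'x)" and T +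
  fixes P :: "'x \<Rightarrow>\<^sub>L 'x"
begin

definition lip :: real where "lip = norm P + 1"

definition trajectory :: "(real \<Rightarrow> 'x) \<Rightarrow> bool" where
  "trajectory z \<longleftrightarrow> continuous_on {0..T} z \<and> (\<forall>t. t \<notin> {0..T} \<longrightarrow> z t = 0)"

definition mild_solution :: "(real \<Rightarrow> 'x) \<Rightarrow> 'x \<Rightarrow> (real \<Rightarrow> 'x) \<Rightarrow> bool" where
  "mild_solution g \<zeta> z \<longleftrightarrow>
     trajectory z \<and> (\<forall>t\<in>{0..T}. z t = S t \<zeta> + duhamel (\<lambda>s. g s - P (z s)) t)"

definition picard :: "(real \<Rightarrow> 'x) \<Rightarrow> 'x \<Rightarrow> (real \<Rightarrow> 'x) \<Rightarrow> real \<Rightarrow> 'x" where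
  "picard g \<zeta> z t = (if t \<in> {0..T} then S t \<zeta> + duhamel (\<lambda>s. g s - P (z s)) t else 0)"

lemma lip_pos: "lip > 0"
  unfolding lip_def by (simp add: add_nonneg_pos)

lemma norm_P_apply_le: "norm (P x) \<le> lip * norm x"
  unfolding lip_def using norm_blinfun[of P x] by (simp add: distrib_right add_increasing2)

lemma trajectory_integrable_forcing:
  assumes "trajectory z"
  shows "integrable_forcing z"
proof -
  have c: "continuous_on {0..T} z" and z0: "\<And>t. t \<notin> {0..T} \<Longrightarrow> z t = 0"
    using assms unfolding trajectory_def by auto
  have "z = (\<lambda>s. indicator {0..T} s *\<^sub>R z s)" using z0 by (auto simp: indicator_def)
  moreover have "(\<lambda>s. indicator {0..T} s *\<^sub>R z s) \<in> borel_measurable borel"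
    by (rule borel_measurable_continuous_on_indicator[OF _ c]) auto
  moreover have "set_integrable lborel {0..T} (\<lambda>s. norm (z s))"
    by (rule borel_integrable_atLeastAtMost') (intro continuous_intros c)
  ultimately show ?thesis
    unfolding integrable_forcing_def by (simp add: measurable_lborel1)
qed

lemma trajectory_bounded:
  assumes "trajectory z"
  obtains b where "b \<ge> 0" "\<And>t. norm (z t) \<le> b"
proof -
  have c: "continuous_on {0..T} z" and z0: "\<And>t. t \<notin> {0..T} \<Longrightarrow> z t = 0"
    using assms unfolding trajectory_def by auto
  have "compact (z ` {0..T})" by (rule compact_continuous_image[OF c]) auto
  then obtain b where b: "b > 0" "\<And>x. x \<in> z ` {0..T} \<Longrightarrow> norm x \<le> b"
    using compact_imp_bounded bounded_pos by metis
  have "norm (z t) \<le> b" for t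
    using b z0[of t] by (cases "t \<in> {0..T}") auto
  with b(1) show ?thesis using that[of b] by simp
qed

lemma integrable_forcing_minus_P:
  assumes "integrable_forcing g" "trajectory z"
  shows "integrable_forcing (\<lambda>s. g s - P (z s))"
  using assms integrable_forcing_diff integrable_forcing_blinfun_apply trajectory_integrable_forcing
  by blast

lemma trajectory_picard:
  assumes g: "integrable_forcing g" and z: "trajectory z"
  shows "trajectory (picard g \<zeta> z)"
proof -
  have "continuous_on {0..T} (\<lambda>t. S t \<zeta> + duhamel (\<lambda>s. g s - P (z s)) t)"
  proof (intro continuous_on_add)
    show "continuous_on {0..T} (\<lambda>t. S t \<zeta>)"
      by (rule continuous_on_subset[OF strongly_continuous]) auto
    show "continuous_on {0..T} (duhamel (\<lambda>s. g s - P (z s)))"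
      by (rule continuous_on_duhamel[OF integrable_forcing_minus_P[OF g z]])
  qed
  then have "continuous_on {0..T} (picard g \<zeta> z)"
    by (rule continuous_on_cong[THEN iffD1, rotated 2]) (auto simp: picard_def)
  then show ?thesis unfolding trajectory_def by (auto simp: picard_def)
qed

lemma trajectory_picard_iterate:
  assumes "integrable_forcing g"
  shows "trajectory ((picard g \<zeta> ^^ n) (\<lambda>_. 0))"
proof (induction n)
  case 0
  show ?case by (simp add: trajectory_def)
next
  case (Suc n)
  then show ?case using trajectory_picard[OF assms] by simp
qed

text \<open>In the norm weighted by \<open>exp (-2 lip t)\<close> the Picard map is a contraction with constant \<open>1/2\<close>.\<close>

lemma norm_picard_diff_le:
  assumes g: "integrable_forcing g" and z1: "trajectory z1" and z2: "trajectory z2"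
    and a: "a \<ge> 0" and t: "t \<in> {0..T}"
    and close: "\<And>s. s \<in> {0..t} \<Longrightarrow> norm (z1 s - z2 s) \<le> a * exp (2 * lip * s)"
  shows "norm (picard g \<zeta> z1 t - picard g \<zeta> z2 t) \<le> a / 2 * exp (2 * lip * t)"
proof -
  have "picard g \<zeta> z1 t - picard g \<zeta> z2 t
      = duhamel (\<lambda>s. g s - P (z1 s)) t - duhamel (\<lambda>s. g s - P (z2 s)) t"
    using t by (simp add: picard_def)
  also have "\<dots> = duhamel (\<lambda>s. (g s - P (z1 s)) - (g s - P (z2 s))) t"
    using t by (intro duhamel_diff[symmetric] integrable_forcing_minus_P g z1 z2) auto
  also have "(\<lambda>s. (g s - P (z1 s)) - (g s - P (z2 s))) = (\<lambda>s. P (z2 s - z1 s))"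
    by (auto simp: blinfun.diff_right)
  finally have eq: "picard g \<zeta> z1 t - picard g \<zeta> z2 t = duhamel (\<lambda>s. P (z2 s - z1 s)) t" .
  have "norm (duhamel (\<lambda>s. P (z2 s - z1 s)) t) \<le> (lip * a) * exp (2 * lip * t) / (2 * lip)"
  proof (rule norm_duhamel_exp_bound[OF lip_pos])
    show "0 \<le> lip * a" using lip_pos a by simp
    show "integrable_forcing (\<lambda>s. P (z2 s - z1 s))"
      by (intro integrable_forcing_blinfun_apply integrable_forcing_diff trajectory_integrable_forcing z1 z2)
    fix s assume s: "s \<in> {0..t}"
    have "norm (P (z2 s - z1 s)) \<le> lip * norm (z1 s - z2 s)"
      using norm_P_apply_le[of "z2 s - z1 s"] by (simp add: norm_minus_commute)
    also have "\<dots> \<le> lip * (a * exp (2 * lip * s))"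
      using close[OF s] lip_pos by (intro mult_left_mono) auto
    finally show "norm (P (z2 s - z1 s)) \<le> lip * a * exp (2 * lip * s)" by simp
  qed (use t in auto)
  also have "\<dots> = a / 2 * exp (2 * lip * t)" using lip_pos by (simp add: field_simps)
  finally show ?thesis using eq by simp
qed

lemma norm_picard_diff_le_uniform:
  assumes g: "integrable_forcing g" and z1: "trajectory z1" and z2: "trajectory z2"
    and t: "t \<in> {0..T}" and close: "\<And>s. s \<in> {0..t} \<Longrightarrow> norm (z1 s - z2 s) \<le> a"
  shows "norm (picard g \<zeta> z1 t - picard g \<zeta> z2 t) \<le> a * exp (2 * lip * T)"
proof -
  have a: "a \<ge> 0" using close[of t] t by (auto intro: order_trans[OF norm_ge_zero])
  have "norm (picard g \<zeta> z1 t - picard g \<zeta> z2 t) \<le> a / 2 * exp (2 * lip * t)"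
  proof (rule norm_picard_diff_le[OF g z1 z2 a t])
    fix s assume s: "s \<in> {0..t}"
    have "exp (2 * lip * s) \<ge> 1" using s lip_pos by auto
    then show "norm (z1 s - z2 s) \<le> a * exp (2 * lip * s)"
      using close[OF s] a mult_left_mono[of 1 "exp (2 * lip * s)" a] by simp
  qed
  also have "\<dots> \<le> a * exp (2 * lip * T)"
    using a t lip_pos by (intro mult_mono) auto
  finally show ?thesis .
qed

lemma picard_mild_solution: "mild_solution g \<zeta> z \<Longrightarrow> picard g \<zeta> z = z"
  unfolding mild_solution_def trajectory_def picard_def by (auto simp: fun_eq_iff)

lemma mild_solution_unique:
  assumes g: "integrable_forcing g" and z1: "mild_solution g \<zeta> z1" and z2: "mild_solution g \<zeta> z2"
  shows "z1 = z2"
proof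
  fix t
  have t1: "trajectory z1" and t2: "trajectory z2"
    using z1 z2 unfolding mild_solution_def by auto
  show "z1 t = z2 t"
  proof (cases "t \<in> {0..T}")
    case False
    then show ?thesis using t1 t2 unfolding trajectory_def by auto
  next
    case True
    have "norm (z1 t - z2 t) \<le> 2 * 0 * exp (2 * lip * T)"
    proof (rule gronwall_exp_weight[OF lip_pos _ _ _ _ True])
      show "continuous_on {0..T} (\<lambda>t. z1 t - z2 t)"
        using t1 t2 unfolding trajectory_def by (intro continuous_intros) auto
      fix t c assume t: "t \<in> {0..T}" and c: "0 \<le> c"
        and close: "\<forall>s\<in>{0..t}. norm (z1 s - z2 s) \<le> c * exp (2 * lip * s)"
      have "z1 t - z2 t = picard g \<zeta> z1 t - picard g \<zeta> z2 t"
        using picard_mild_solution[OF z1] picard_mild_solution[OF z2] by simp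
      also have "norm \<dots> \<le> c / 2 * exp (2 * lip * t)"
        using norm_picard_diff_le[OF g t1 t2 c t] close by auto
      finally show "norm (z1 t - z2 t) \<le> 0 + c * exp (2 * lip * t) / 2" by simp
    qed (use T_pos in auto)
    then show ?thesis by simp
  qed
qed

lemma mild_solution_lincomb:
  assumes g1: "integrable_forcing g1" and g2: "integrable_forcing g2"
    and z1: "mild_solution g1 \<zeta>1 z1" and z2: "mild_solution g2 \<zeta>2 z2"
  shows "mild_solution (\<lambda>s. a *\<^sub>R g1 s + b *\<^sub>R g2 s) (a *\<^sub>R \<zeta>1 + b *\<^sub>R \<zeta>2) (\<lambda>t. a *\<^sub>R z1 t + b *\<^sub>R z2 t)"
proof -
  have t1: "trajectory z1" and t2: "trajectory z2"
    using z1 z2 unfolding mild_solution_def by auto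
  have "a *\<^sub>R z1 t + b *\<^sub>R z2 t = S t (a *\<^sub>R \<zeta>1 + b *\<^sub>R \<zeta>2) +
      duhamel (\<lambda>s. (a *\<^sub>R g1 s + b *\<^sub>R g2 s) - P (a *\<^sub>R z1 s + b *\<^sub>R z2 s)) t"
    if t: "t \<in> {0..T}" for t
  proof -
    have f1: "integrable_forcing (\<lambda>s. g1 s - P (z1 s))" and f2: "integrable_forcing (\<lambda>s. g2 s - P (z2 s))"
      using integrable_forcing_minus_P g1 g2 t1 t2 by auto
    have "(\<lambda>s. (a *\<^sub>R g1 s + b *\<^sub>R g2 s) - P (a *\<^sub>R z1 s + b *\<^sub>R z2 s))
       = (\<lambda>s. a *\<^sub>R (g1 s - P (z1 s)) + b *\<^sub>R (g2 s - P (z2 s)))"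
      by (auto simp: blinfun.add_right blinfun.scaleR_right algebra_simps)
    moreover have "duhamel (\<lambda>s. a *\<^sub>R (g1 s - P (z1 s)) + b *\<^sub>R (g2 s - P (z2 s))) t
        = a *\<^sub>R duhamel (\<lambda>s. g1 s - P (z1 s)) t + b *\<^sub>R duhamel (\<lambda>s. g2 s - P (z2 s)) t"
      using t by (simp add: duhamel_add integrable_forcing_scaleR f1 f2 duhamel_scaleR)
    moreover have "z1 t = S t \<zeta>1 + duhamel (\<lambda>s. g1 s - P (z1 s)) t"
      and "z2 t = S t \<zeta>2 + duhamel (\<lambda>s. g2 s - P (z2 s)) t"
      using z1 z2 t unfolding mild_solution_def by auto
    ultimately show ?thesis by (simp add: blinfun.add_right blinfun.scaleR_right algebra_simps)
  qed
  moreover have "trajectory (\<lambda>t. a *\<^sub>R z1 t + b *\<^sub>R z2 t)"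
    using t1 t2 unfolding trajectory_def by (auto intro!: continuous_intros)
  ultimately show ?thesis unfolding mild_solution_def by auto
qed

lemma picard_iterates_steps:
  assumes g: "integrable_forcing g"
  obtains a where "\<And>n t. norm ((picard g \<zeta> ^^ Suc n) (\<lambda>_. 0) t - (picard g \<zeta> ^^ n) (\<lambda>_. 0) t) \<le> a * (1/2)^n"
proof -
  define zs where "zs n = (picard g \<zeta> ^^ n) (\<lambda>_. 0)" for n
  have traj: "trajectory (zs n)" for n
    unfolding zs_def by (rule trajectory_picard_iterate[OF g])
  obtain a0 where a0: "a0 \<ge> 0" "\<And>t. norm (zs 1 t) \<le> a0"
    using trajectory_bounded[OF traj[of 1]] by blast
  have weighted: "norm (zs (Suc n) t - zs n t) \<le> a0 * (1/2)^n * exp (2 * lip * t)"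
    if "t \<in> {0..T}" for n t
    using that
  proof (induction n arbitrary: t)
    case 0
    have "a0 \<le> a0 * exp (2 * lip * t)"
      using 0 lip_pos a0(1) mult_left_mono[of 1 "exp (2 * lip * t)" a0] by auto
    then show ?case using a0(2)[of t] by (simp add: zs_def)
  next
    case (Suc n)
    have "norm (picard g \<zeta> (zs (Suc n)) t - picard g \<zeta> (zs n) t) \<le> a0 * (1/2)^n / 2 * exp (2 * lip * t)"
      by (rule norm_picard_diff_le[OF g traj traj _ Suc.prems]) (use Suc a0 in auto)
    then show ?case by (simp add: zs_def)
  qed
  have "norm (zs (Suc n) t - zs n t) \<le> a0 * exp (2 * lip * T) * (1/2)^n" for n t
  proof (cases "t \<in> {0..T}")
    case True
    have "a0 * (1/2)^n * exp (2 * lip * t) \<le> a0 * (1/2)^n * exp (2 * lip * T)"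
      using True lip_pos a0(1) by (intro mult_left_mono) auto
    with weighted[OF True, of n] show ?thesis by (simp add: mult_ac)
  next
    case False
    then show ?thesis using traj[of n] traj[of "Suc n"] a0(1) unfolding trajectory_def by simp
  qed
  then show ?thesis using that unfolding zs_def by blast
qed

lemma mild_solution_exists:
  assumes g: "integrable_forcing g"
  obtains z where "mild_solution g \<zeta> z"
proof -
  define zs where "zs n = (picard g \<zeta> ^^ n) (\<lambda>_. 0)" for n
  have traj: "trajectory (zs n)" for n
    unfolding zs_def by (rule trajectory_picard_iterate[OF g])
  obtain a where "\<And>n t. norm (zs (Suc n) t - zs n t) \<le> a * (1/2)^n"
    using picard_iterates_steps[OF g] unfolding zs_def by blast
  moreover have "summable (\<lambda>n. a * (1/2::real)^n)" by (intro summable_mult summable_geometric) auto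
  ultimately obtain z where unif: "uniform_limit UNIV zs z sequentially"
    by (rule uniform_limit_summable_steps)
  have lim: "(\<lambda>n. zs n t) \<longlonglongrightarrow> z t" for t by (rule tendsto_uniform_limitI[OF unif]) auto
  have "continuous_on {0..T} z"
    using traj unfolding trajectory_def
    by (intro uniform_limit_theorem[OF _ uniform_limit_on_subset[OF unif]]) auto
  moreover have "z t = 0" if "t \<notin> {0..T}" for t
    using LIMSEQ_unique[OF lim[of t]] traj that unfolding trajectory_def by simp
  ultimately have z: "trajectory z" unfolding trajectory_def by blast
  have "picard g \<zeta> z t = z t" if t: "t \<in> {0..T}" for t
  proof (rule LIMSEQ_unique)
    show "(\<lambda>n. picard g \<zeta> (zs n) t) \<longlonglongrightarrow> z t"
      using LIMSEQ_Suc[OF lim[of t]] by (simp add: zs_def)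
    show "(\<lambda>n. picard g \<zeta> (zs n) t) \<longlonglongrightarrow> picard g \<zeta> z t"
    proof (rule tendstoI)
      fix e :: real assume "e > 0"
      define K where "K = exp (2 * lip * T)"
      have "K > 0" unfolding K_def by simp
      with \<open>e > 0\<close> have "\<forall>\<^sub>F n in sequentially. \<forall>s\<in>UNIV. dist (zs n s) (z s) < e / (2 * K)"
        by (intro uniform_limitD[OF unif]) auto
      then show "\<forall>\<^sub>F n in sequentially. dist (picard g \<zeta> (zs n) t) (picard g \<zeta> z t) < e"
      proof eventually_elim
        case (elim n)
        have "norm (picard g \<zeta> (zs n) t - picard g \<zeta> z t) \<le> e / (2 * K) * K"
          unfolding K_def
          by (rule norm_picard_diff_le_uniform[OF g traj z t])
            (use elim in \<open>auto simp: dist_norm K_def less_imp_le\<close>)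
        also have "\<dots> < e" using \<open>e > 0\<close> \<open>K > 0\<close> by simp
        finally show ?case by (simp add: dist_norm)
      qed
    qed
  qed
  with z show ?thesis by (intro that) (auto simp: mild_solution_def picard_def)
qed

lemma ex1_mild_solution:
  assumes "integrable_forcing g"
  shows "\<exists>!z. mild_solution g \<zeta> z"
proof -
  obtain z where "mild_solution g \<zeta> z" using mild_solution_exists[OF assms] .
  then show ?thesis using mild_solution_unique[OF assms] by blast
qed

lemma norm_mild_solution_le:
  assumes g: "integrable_forcing g" and z: "mild_solution g \<zeta> z" and t: "t \<in> {0..T}"
  shows "norm (z t) \<le> 2 * (norm \<zeta> + (LINT s:{0..T}|lborel. norm (g s))) * exp (2 * lip * T)"
proof (rule gronwall_exp_weight[OF lip_pos _ _ _ _ t])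
  have traj: "trajectory z" using z unfolding mild_solution_def by auto
  then show "continuous_on {0..T} z" unfolding trajectory_def by auto
  have "0 \<le> (LINT s:{0..T}|lborel. norm (g s))"
    unfolding set_lebesgue_integral_def by (intro integral_nonneg_AE) (auto simp: indicator_def)
  then show "0 \<le> norm \<zeta> + (LINT s:{0..T}|lborel. norm (g s))" by simp
  show "0 \<le> T" using T_pos by simp
  fix t c assume t: "t \<in> {0..T}" and c: "0 \<le> c"
    and close: "\<forall>s\<in>{0..t}. norm (z s) \<le> c * exp (2 * lip * s)"
  have Pz: "integrable_forcing (\<lambda>s. P (z s))"
    by (rule integrable_forcing_blinfun_apply[OF trajectory_integrable_forcing[OF traj]])
  have eq: "z t = S t \<zeta> + (duhamel g t - duhamel (\<lambda>s. P (z s)) t)"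
    using z t duhamel_diff[OF g Pz, of t] unfolding mild_solution_def by auto
  have "norm (z t) \<le> norm (S t \<zeta>) + norm (duhamel g t - duhamel (\<lambda>s. P (z s)) t)"
    by (subst eq) (rule norm_triangle_ineq)
  then have "norm (z t) \<le> norm (S t \<zeta>) + norm (duhamel g t) + norm (duhamel (\<lambda>s. P (z s)) t)"
    using norm_triangle_ineq4[of "duhamel g t" "duhamel (\<lambda>s. P (z s)) t"] by linarith
  also have "\<dots> \<le> norm \<zeta> + (LINT s:{0..T}|lborel. norm (g s)) + c * exp (2 * lip * t) / 2"
  proof (intro add_mono)
    show "norm (S t \<zeta>) \<le> norm \<zeta>" using t by (intro norm_S_apply_le) auto
    show "norm (duhamel g t) \<le> (LINT s:{0..T}|lborel. norm (g s))"
      by (rule norm_duhamel_le_total[OF g t])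
    have "norm (duhamel (\<lambda>s. P (z s)) t) \<le> (lip * c) * exp (2 * lip * t) / (2 * lip)"
    proof (rule norm_duhamel_exp_bound[OF lip_pos _ Pz])
      fix s assume s: "s \<in> {0..t}"
      have "norm (P (z s)) \<le> lip * norm (z s)" by (rule norm_P_apply_le)
      also have "\<dots> \<le> lip * (c * exp (2 * lip * s))"
        using close s lip_pos by (intro mult_left_mono) auto
      finally show "norm (P (z s)) \<le> lip * c * exp (2 * lip * s)" by simp
    qed (use t c lip_pos in auto)
    then show "norm (duhamel (\<lambda>s. P (z s)) t) \<le> c * exp (2 * lip * t) / 2"
      using lip_pos by (simp add: field_simps)
  qed
  finally show "norm (z t) \<le> norm \<zeta> + (LINT s:{0..T}|lborel. norm (g s)) + c * exp (2 * lip * t) / 2" .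
qed

end

section \<open>The observer and its cost\<close>

locale observer_problem = contraction_family S T
  for S :: "real \<Rightarrow> ('x::{real_inner,polish_space} \<Rightarrow>\<^sub>L 'x)" and T +
  fixes C :: "'x \<Rightarrow>\<^sub>L 'y::{real_inner,polish_space}"
    and B :: "real \<Rightarrow> ('th::{real_inner,polish_space} \<Rightarrow>\<^sub>L 'x)"
    and y :: "real \<Rightarrow> 'y" and kappa :: real
  assumes B_meas: "set_borel_measurable lborel {0..T} B"
    and B_L2: "set_integrable lborel {0..T} (\<lambda>t. (norm (B t))\<^sup>2)"
    and y_meas: "set_borel_measurable lborel {0..T} y"
    and y_L2: "set_integrable lborel {0..T} (\<lambda>t. (norm (y t))\<^sup>2)"
begin

sublocale perturbed_mild_equation S T "kappa *\<^sub>R (badj C o\<^sub>L C)"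
  by intro_locales

definition input_forcing :: "'th \<Rightarrow> real \<Rightarrow> 'x" where
  "input_forcing \<xi> s = indicator {0..T} s *\<^sub>R B s \<xi>"

definition data_forcing :: "real \<Rightarrow> 'x" where
  "data_forcing s = indicator {0..T} s *\<^sub>R (kappa *\<^sub>R badj C (y s))"

text \<open>An \<open>L\<^sup>1\<close> bound for \<open>B\<close>, obtained from the \<open>L\<^sup>2\<close> hypothesis via \<open>\<parallel>B\<parallel> \<le> 1 + \<parallel>B\<parallel>\<^sup>2\<close>.\<close>

definition B_bound :: real where
  "B_bound = (LINT s:{0..T}|lborel. 1 + (norm (B s))\<^sup>2)"

lemma set_integrable_B_bound: "set_integrable lborel {0..T} (\<lambda>s. 1 + (norm (B s))\<^sup>2)"
  using set_integrable_const_atLeastAtMost B_L2 by (rule set_integral_add(1))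

lemma norm_input_forcing_le: "norm (input_forcing \<xi> s) \<le> (1 + (norm (B s))\<^sup>2) * norm \<xi>"
proof -
  have "norm (B s \<xi>) \<le> norm (B s) * norm \<xi>" by (rule norm_blinfun)
  also have "\<dots> \<le> (1 + (norm (B s))\<^sup>2) * norm \<xi>" by (intro mult_right_mono le_1_plus_power2) auto
  finally show ?thesis by (simp add: input_forcing_def indicator_def)
qed

lemma norm_data_forcing_le:
  "norm (data_forcing s) \<le> \<bar>kappa\<bar> * norm (badj C) * (1 + (norm (y s))\<^sup>2)"
proof -
  have "norm (kappa *\<^sub>R badj C (y s)) \<le> \<bar>kappa\<bar> * norm (badj C) * norm (y s)"
    using norm_blinfun[of "badj C" "y s"] by (simp add: mult_left_mono mult.assoc)
  also have "\<dots> \<le> \<bar>kappa\<bar> * norm (badj C) * (1 + (norm (y s))\<^sup>2)"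
    by (intro mult_left_mono le_1_plus_power2) auto
  finally show ?thesis by (simp add: data_forcing_def indicator_def)
qed

lemma integrable_forcing_input: "integrable_forcing (input_forcing \<xi>)"
proof -
  have "(\<lambda>s. blinfun_apply (indicator {0..T} s *\<^sub>R B s) \<xi>) \<in> borel_measurable lborel"
    using borel_measurable_continuous_on[OF linear_continuous_on[OF blinfun.bounded_linear_left]
        B_meas[unfolded set_borel_measurable_def]] .
  then have m: "input_forcing \<xi> \<in> borel_measurable lborel"
    unfolding input_forcing_def by (simp add: blinfun.scaleR_left)
  have "set_integrable lborel {0..T} (\<lambda>s. (1 + (norm (B s))\<^sup>2) * norm \<xi>)"
    using set_integrable_B_bound by (rule set_integrable_mult_left)
  then have "set_integrable lborel {0..T} (\<lambda>s. norm (input_forcing \<xi> s))"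
  proof (rule set_integrable_bound)
    show "set_borel_measurable lborel {0..T} (\<lambda>s. norm (input_forcing \<xi> s))"
      using m unfolding set_borel_measurable_def by measurable
  qed (intro AE_I2, simp add: norm_input_forcing_le)
  with m show ?thesis unfolding integrable_forcing_def by simp
qed

lemma integrable_forcing_data: "integrable_forcing data_forcing"
proof -
  have "(\<lambda>s. kappa *\<^sub>R badj C (indicator {0..T} s *\<^sub>R y s)) \<in> borel_measurable lborel"
    using borel_measurable_continuous_on[OF linear_continuous_on[OF blinfun.bounded_linear_right]
        y_meas[unfolded set_borel_measurable_def]]
    by (intro borel_measurable_scaleR) auto
  then have m: "data_forcing \<in> borel_measurable lborel"
    unfolding data_forcing_def by (simp add: blinfun.scaleR_right mult.commute)
  have "set_integrable lborel {0..T} (\<lambda>s. \<bar>kappa\<bar> * norm (badj C) * (1 + (norm (y s))\<^sup>2))"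
    using set_integrable_const_atLeastAtMost y_L2
    by (intro set_integrable_mult_right set_integral_add(1))
  then have "set_integrable lborel {0..T} (\<lambda>s. norm (data_forcing s))"
  proof (rule set_integrable_bound)
    show "set_borel_measurable lborel {0..T} (\<lambda>s. norm (data_forcing s))"
      using m unfolding set_borel_measurable_def by measurable
    show "AE s in lborel. s \<in> {0..T} \<longrightarrow>
        norm (norm (data_forcing s)) \<le> norm (\<bar>kappa\<bar> * norm (badj C) * (1 + (norm (y s))\<^sup>2))"
      using norm_data_forcing_le by (intro AE_I2) (auto intro: order_trans)
  qed
  with m show ?thesis unfolding integrable_forcing_def by simp
qed

lemma is_mild_sol_iff:
  "is_mild_sol S B C kappa y T \<xi> \<zeta> z \<longleftrightarrow> mild_solution (\<lambda>s. input_forcing \<xi> s + data_forcing s) \<zeta> z"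
proof -
  let ?g = "\<lambda>s. input_forcing \<xi> s + data_forcing s"
  have integrand: "S (t - s) (B s \<xi> + kappa *\<^sub>R badj C (y s - C (z s)))
      = S (t - s) (?g s - (kappa *\<^sub>R (badj C o\<^sub>L C)) (z s))" if "t \<in> {0..T}" "s \<in> {0..t}" for t s
    using that by (simp add: input_forcing_def data_forcing_def blinfun.diff_right blinfun.scaleR_left
        algebra_simps)
  have integrable: "set_integrable lborel {0..t} (\<lambda>s. S (t - s) (B s \<xi> + kappa *\<^sub>R badj C (y s - C (z s))))
      \<longleftrightarrow> set_integrable lborel {0..t} (\<lambda>s. S (t - s) (?g s - (kappa *\<^sub>R (badj C o\<^sub>L C)) (z s)))"
    if "t \<in> {0..T}" for t
    by (rule set_integrable_cong) (use integrand[OF that] in auto)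
  have integral: "(LINT s:{0..t}|lborel. S (t - s) (B s \<xi> + kappa *\<^sub>R badj C (y s - C (z s))))
      = duhamel (\<lambda>s. ?g s - (kappa *\<^sub>R (badj C o\<^sub>L C)) (z s)) t" if "t \<in> {0..T}" for t
    unfolding duhamel_def by (rule set_lebesgue_integral_cong) (use integrand[OF that] in auto)
  have g: "integrable_forcing ?g"
    by (intro integrable_forcing_add integrable_forcing_input integrable_forcing_data)
  show ?thesis
  proof
    assume "is_mild_sol S B C kappa y T \<xi> \<zeta> z"
    then show "mild_solution ?g \<zeta> z"
      unfolding is_mild_sol_def mild_solution_def trajectory_def using integral by auto
  next
    assume H: "mild_solution ?g \<zeta> z"
    then have "trajectory z" unfolding mild_solution_def by auto
    then have "set_integrable lborel {0..t} (\<lambda>s. S (t - s) (?g s - (kappa *\<^sub>R (badj C o\<^sub>L C)) (z s)))"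
      if "t \<in> {0..T}" for t
      using that by (intro set_integrable_duhamel integrable_forcing_minus_P g) auto
    then show "is_mild_sol S B C kappa y T \<xi> \<zeta> z"
      using H integrable integral unfolding is_mild_sol_def mild_solution_def trajectory_def by auto
  qed
qed

definition input_response :: "'th \<Rightarrow> 'x \<Rightarrow> real \<Rightarrow> 'x" where
  "input_response \<xi> \<zeta> = (THE z. mild_solution (input_forcing \<xi>) \<zeta> z)"

definition data_response :: "real \<Rightarrow> 'x" where
  "data_response = (THE z. mild_solution data_forcing 0 z)"

lemma mild_solution_input_response: "mild_solution (input_forcing \<xi>) \<zeta> (input_response \<xi> \<zeta>)"
  unfolding input_response_def by (rule theI'[OF ex1_mild_solution[OF integrable_forcing_input]])

lemma mild_solution_data_response: "mild_solution data_forcing 0 data_response"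
  unfolding data_response_def by (rule theI'[OF ex1_mild_solution[OF integrable_forcing_data]])

lemma hatz_eq: "hatz S B C kappa y T \<xi> \<zeta> = (\<lambda>t. input_response \<xi> \<zeta> t + data_response t)"
proof -
  let ?g = "\<lambda>s. input_forcing \<xi> s + data_forcing s"
  have "mild_solution (\<lambda>s. 1 *\<^sub>R input_forcing \<xi> s + 1 *\<^sub>R data_forcing s) (1 *\<^sub>R \<zeta> + 1 *\<^sub>R 0)
      (\<lambda>t. 1 *\<^sub>R input_response \<xi> \<zeta> t + 1 *\<^sub>R data_response t)"
    by (rule mild_solution_lincomb[OF integrable_forcing_input integrable_forcing_data
          mild_solution_input_response mild_solution_data_response])
  then have "mild_solution ?g \<zeta> (\<lambda>t. input_response \<xi> \<zeta> t + data_response t)" by simp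
  moreover have "integrable_forcing ?g"
    by (intro integrable_forcing_add integrable_forcing_input integrable_forcing_data)
  moreover have "is_mild_sol S B C kappa y T \<xi> \<zeta> = mild_solution ?g \<zeta>"
    by (rule ext) (rule is_mild_sol_iff)
  then have "mild_solution ?g \<zeta> (hatz S B C kappa y T \<xi> \<zeta>)"
    unfolding hatz_def using theI'[OF ex1_mild_solution[OF \<open>integrable_forcing ?g\<close>]] by simp
  ultimately show ?thesis using mild_solution_unique by blast
qed

lemma input_response_lincomb:
  "input_response (a *\<^sub>R \<xi>1 + b *\<^sub>R \<xi>2) (a *\<^sub>R \<zeta>1 + b *\<^sub>R \<zeta>2)
     = (\<lambda>t. a *\<^sub>R input_response \<xi>1 \<zeta>1 t + b *\<^sub>R input_response \<xi>2 \<zeta>2 t)"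
proof -
  have "input_forcing (a *\<^sub>R \<xi>1 + b *\<^sub>R \<xi>2) = (\<lambda>s. a *\<^sub>R input_forcing \<xi>1 s + b *\<^sub>R input_forcing \<xi>2 s)"
    by (auto simp: input_forcing_def blinfun.add_right blinfun.scaleR_right algebra_simps)
  then have "mild_solution (input_forcing (a *\<^sub>R \<xi>1 + b *\<^sub>R \<xi>2)) (a *\<^sub>R \<zeta>1 + b *\<^sub>R \<zeta>2)
      (\<lambda>t. a *\<^sub>R input_response \<xi>1 \<zeta>1 t + b *\<^sub>R input_response \<xi>2 \<zeta>2 t)"
    using mild_solution_lincomb[OF integrable_forcing_input integrable_forcing_input
        mild_solution_input_response mild_solution_input_response] by simp
  then show ?thesis
    using mild_solution_unique[OF integrable_forcing_input mild_solution_input_response] by blast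
qed

definition output_map :: "'th \<times> 'x \<Rightarrow> real \<Rightarrow> 'y" where
  "output_map p t = C (input_response (fst p) (snd p) t)"

definition residual :: "real \<Rightarrow> 'y" where
  "residual t = y t - C (data_response t)"

lemma output_map_lincomb: "output_map (a *\<^sub>R p + b *\<^sub>R q) t = a *\<^sub>R output_map p t + b *\<^sub>R output_map q t"
  unfolding output_map_def using input_response_lincomb[of a "fst p" b "fst q" "snd p" "snd q"]
  by (simp add: blinfun.add_right blinfun.scaleR_right)

lemma output_map_diff: "output_map (p - q) t = output_map p t - output_map q t"
  using output_map_lincomb[of 1 p "-1" q t] by simp

lemma continuous_on_output_map: "continuous_on {0..T} (output_map p)"
  using mild_solution_input_response[of "fst p" "snd p"]
  unfolding output_map_def mild_solution_def trajectory_def by (auto intro: continuous_intros)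

lemma set_integrable_output_map_power2: "set_integrable lborel {0..T} (\<lambda>t. (norm (output_map p t))\<^sup>2)"
  by (rule borel_integrable_atLeastAtMost') (intro continuous_intros continuous_on_output_map)

lemma set_integrable_norm_output_map: "set_integrable lborel {0..T} (\<lambda>t. norm (output_map p t))"
  by (rule borel_integrable_atLeastAtMost') (intro continuous_intros continuous_on_output_map)

lemma set_integrable_fit: "set_integrable lborel {0..T} (\<lambda>t. (norm (residual t - output_map p t))\<^sup>2)"
proof -
  define V where "V t = C (data_response t) + output_map p t" for t
  have V: "continuous_on {0..T} V"
    using mild_solution_data_response continuous_on_output_map
    unfolding V_def mild_solution_def trajectory_def by (intro continuous_intros) auto
  have "set_integrable lborel {0..T} (\<lambda>t. (norm (y t - V t))\<^sup>2)"
  proof (rule set_integrable_norm_diff_power2[OF y_meas _ y_L2])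
    show "set_borel_measurable lborel {0..T} V"
      using borel_measurable_continuous_on_indicator[OF _ V]
      by (simp add: set_borel_measurable_def measurable_lborel1)
    show "set_integrable lborel {0..T} (\<lambda>t. (norm (V t))\<^sup>2)"
      by (intro borel_integrable_atLeastAtMost' continuous_intros V)
  qed
  moreover have "residual t - output_map p t = y t - V t" for t
    unfolding residual_def V_def by simp
  ultimately show ?thesis by simp
qed

lemma integral_norm_input_forcing_le:
  "(LINT s:{0..T}|lborel. norm (input_forcing \<xi> s)) \<le> B_bound * norm \<xi>"
proof -
  have "(LINT s:{0..T}|lborel. norm (input_forcing \<xi> s))
      \<le> (LINT s:{0..T}|lborel. (1 + (norm (B s))\<^sup>2) * norm \<xi>)"
  proof (rule set_integral_mono)
    show "set_integrable lborel {0..T} (\<lambda>s. norm (input_forcing \<xi> s))"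
      using integrable_forcing_input unfolding integrable_forcing_def by auto
    show "set_integrable lborel {0..T} (\<lambda>s. (1 + (norm (B s))\<^sup>2) * norm \<xi>)"
      using set_integrable_B_bound by (rule set_integrable_mult_left)
  qed (rule norm_input_forcing_le)
  then show ?thesis unfolding B_bound_def by simp
qed

lemma B_bound_nonneg: "B_bound \<ge> 0"
  unfolding B_bound_def set_lebesgue_integral_def by (intro integral_nonneg_AE) (auto simp: indicator_def)

lemma norm_output_map_le:
  assumes "t \<in> {0..T}"
  shows "norm (output_map h t) \<le> 2 * norm C * (1 + B_bound) * exp (2 * lip * T) * norm h"
proof -
  obtain \<xi> \<zeta> where h: "h = (\<xi>, \<zeta>)" by fastforce
  have "norm (input_response \<xi> \<zeta> t)
      \<le> 2 * (norm \<zeta> + (LINT s:{0..T}|lborel. norm (input_forcing \<xi> s))) * exp (2 * lip * T)"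
    by (rule norm_mild_solution_le[OF integrable_forcing_input mild_solution_input_response assms])
  also have "\<dots> \<le> 2 * ((1 + B_bound) * norm h) * exp (2 * lip * T)"
  proof -
    have "norm \<zeta> + (LINT s:{0..T}|lborel. norm (input_forcing \<xi> s)) \<le> norm h + B_bound * norm h"
      using integral_norm_input_forcing_le[of \<xi>] norm_snd_le[of \<zeta> \<xi>] norm_fst_le[of \<xi> \<zeta>]
        B_bound_nonneg mult_left_mono[of "norm \<xi>" "norm h" B_bound]
      by (simp add: h)
    then show ?thesis by (intro mult_right_mono mult_left_mono) (simp_all add: algebra_simps)
  qed
  finally have "norm (input_response \<xi> \<zeta> t) \<le> 2 * ((1 + B_bound) * norm h) * exp (2 * lip * T)" .
  then have "norm C * norm (input_response \<xi> \<zeta> t) \<le> norm C * (2 * ((1 + B_bound) * norm h) * exp (2 * lip * T))"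
    by (rule mult_left_mono) simp
  with norm_blinfun[of C "input_response \<xi> \<zeta> t"] show ?thesis
    unfolding output_map_def h by (simp add: algebra_simps)
qed

lemma norm_duhamel_injection_le:
  assumes t: "t \<in> {0..T}"
  shows "norm (duhamel (\<lambda>s. (kappa *\<^sub>R (badj C o\<^sub>L C)) (input_response \<xi> \<zeta> s)) t)
      \<le> \<bar>kappa\<bar> * norm (badj C) * (LINT s:{0..T}|lborel. norm (output_map (\<xi>, \<zeta>) s))"
proof -
  define Pw where "Pw s = (kappa *\<^sub>R (badj C o\<^sub>L C)) (input_response \<xi> \<zeta> s)" for s
  have Pw: "integrable_forcing Pw"
    using mild_solution_input_response[of \<xi> \<zeta>] unfolding Pw_def mild_solution_def
    by (intro integrable_forcing_blinfun_apply trajectory_integrable_forcing) auto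
  have "norm (duhamel Pw t) \<le> (LINT s:{0..T}|lborel. norm (Pw s))"
    by (rule norm_duhamel_le_total[OF Pw t])
  also have "\<dots> \<le> (LINT s:{0..T}|lborel. \<bar>kappa\<bar> * norm (badj C) * norm (output_map (\<xi>, \<zeta>) s))"
  proof (rule set_integral_mono)
    show "set_integrable lborel {0..T} (\<lambda>s. norm (Pw s))"
      using Pw unfolding integrable_forcing_def by auto
    show "set_integrable lborel {0..T} (\<lambda>s. \<bar>kappa\<bar> * norm (badj C) * norm (output_map (\<xi>, \<zeta>) s))"
      using set_integrable_norm_output_map by (rule set_integrable_mult_right)
    fix s
    have "norm (Pw s) = \<bar>kappa\<bar> * norm (badj C (output_map (\<xi>, \<zeta>) s))"
      by (simp add: Pw_def output_map_def blinfun.scaleR_left)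
    also have "\<dots> \<le> \<bar>kappa\<bar> * (norm (badj C) * norm (output_map (\<xi>, \<zeta>) s))"
      by (intro mult_left_mono norm_blinfun) auto
    finally show "norm (Pw s) \<le> \<bar>kappa\<bar> * norm (badj C) * norm (output_map (\<xi>, \<zeta>) s)"
      by (simp add: mult.assoc)
  qed
  finally show ?thesis unfolding Pw_def by simp
qed

lemma norm_C_S_le:
  assumes t: "t \<in> {0..T}"
  shows "norm (C (S t (snd h))) \<le> norm (output_map h t) + norm C * (B_bound * norm (fst h)
      + \<bar>kappa\<bar> * norm (badj C) * (LINT s:{0..T}|lborel. norm (output_map h s)))"
proof -
  obtain \<xi> \<zeta> where h: "h = (\<xi>, \<zeta>)" by fastforce
  define Pw where "Pw s = (kappa *\<^sub>R (badj C o\<^sub>L C)) (input_response \<xi> \<zeta> s)" for s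
  have w: "mild_solution (input_forcing \<xi>) \<zeta> (input_response \<xi> \<zeta>)"
    by (rule mild_solution_input_response)
  then have Pw: "integrable_forcing Pw"
    unfolding Pw_def mild_solution_def
    by (intro integrable_forcing_blinfun_apply trajectory_integrable_forcing) auto
  have "input_response \<xi> \<zeta> t = S t \<zeta> + (duhamel (input_forcing \<xi>) t - duhamel Pw t)"
    using w t duhamel_diff[OF integrable_forcing_input Pw, of t] unfolding mild_solution_def Pw_def by auto
  then have eq: "C (S t \<zeta>) = (output_map h t - C (duhamel (input_forcing \<xi>) t)) + C (duhamel Pw t)"
    by (simp add: output_map_def h blinfun.add_right blinfun.diff_right)
  have "norm (duhamel (input_forcing \<xi>) t) \<le> B_bound * norm \<xi>"
    using norm_duhamel_le_total[OF integrable_forcing_input t] integral_norm_input_forcing_le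
    by (rule order_trans)
  then have input: "norm (C (duhamel (input_forcing \<xi>) t)) \<le> norm C * (B_bound * norm \<xi>)"
    using norm_blinfun[of C "duhamel (input_forcing \<xi>) t"] mult_left_mono[OF _ norm_ge_zero[of C]]
    by (meson order_trans)
  have feedback: "norm (C (duhamel Pw t))
      \<le> norm C * (\<bar>kappa\<bar> * norm (badj C) * (LINT s:{0..T}|lborel. norm (output_map h s)))"
    using norm_blinfun[of C "duhamel Pw t"] mult_left_mono[OF norm_duhamel_injection_le[OF t] norm_ge_zero[of C]]
    unfolding Pw_def h by (meson order_trans)
  have "norm (C (S t \<zeta>))
      \<le> norm (output_map h t) + norm (C (duhamel (input_forcing \<xi>) t)) + norm (C (duhamel Pw t))"
    unfolding eq using norm_triangle_ineq[of "output_map h t - C (duhamel (input_forcing \<xi>) t)"]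
      norm_triangle_ineq4[of "output_map h t"] by (meson add_right_mono order_trans)
  then show ?thesis using input feedback by (simp add: h algebra_simps)
qed

end

locale observer_cost = observer_problem S T C B y kappa
  for S :: "real \<Rightarrow> ('x::{real_inner,polish_space} \<Rightarrow>\<^sub>L 'x)" and T
    and C :: "'x \<Rightarrow>\<^sub>L 'y::{real_inner,polish_space}"
    and B :: "real \<Rightarrow> ('th::{real_inner,polish_space} \<Rightarrow>\<^sub>L 'x)"
    and y :: "real \<Rightarrow> 'y" and kappa :: real +
  fixes U0 :: "'th \<Rightarrow>\<^sub>L 'th" and theta0 :: 'th and delta gamma0 :: real
  assumes delta: "delta > 0" and U0_coercive: "\<And>a. inner a (U0 a) \<ge> delta * (norm a)\<^sup>2"
    and gamma0: "gamma0 > 0"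
    and observable: "\<And>x. (LINT t:{0..T}|lborel. (norm (C (S t x)))\<^sup>2) \<ge> gamma0\<^sup>2 * (norm x)\<^sup>2"
begin

definition cost :: "'th \<times> 'x \<Rightarrow> real" where
  "cost p = costJ S B C kappa y T U0 theta0 (fst p) (snd p)"

definition prior_cost :: "'th \<Rightarrow> real" where
  "prior_cost \<xi> = inner (\<xi> - theta0) (U0 (\<xi> - theta0))"

definition fit_cost :: "'th \<times> 'x \<Rightarrow> real" where
  "fit_cost p = (LINT t:{0..T}|lborel. (norm (residual t - output_map p t))\<^sup>2)"

definition output_energy :: "'th \<times> 'x \<Rightarrow> real" where
  "output_energy h = (LINT t:{0..T}|lborel. (norm (output_map h t))\<^sup>2)"

definition curvature :: "'th \<times> 'x \<Rightarrow> real" where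
  "curvature h = inner (fst h) (U0 (fst h)) + output_energy h"

lemma cost_eq: "cost p = prior_cost (fst p) + fit_cost p"
proof -
  have "y t - C (hatz S B C kappa y T (fst p) (snd p) t) = residual t - output_map p t" for t
    unfolding hatz_eq residual_def output_map_def by (simp add: blinfun.add_right)
  then show ?thesis unfolding cost_def costJ_def prior_cost_def fit_cost_def by simp
qed

lemma output_energy_nonneg: "output_energy h \<ge> 0"
  unfolding output_energy_def set_lebesgue_integral_def
  by (intro integral_nonneg_AE) (auto simp: indicator_def)

lemma fit_cost_nonneg: "fit_cost p \<ge> 0"
  unfolding fit_cost_def set_lebesgue_integral_def
  by (intro integral_nonneg_AE) (auto simp: indicator_def)

lemma inner_U0_nonneg: "inner a (U0 a) \<ge> 0"
  using U0_coercive[of a] delta by (smt (verit) mult_nonneg_nonneg zero_le_power2)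

lemma cost_nonneg: "cost p \<ge> 0"
  unfolding cost_eq prior_cost_def using inner_U0_nonneg fit_cost_nonneg by (simp add: add_nonneg_nonneg)

lemma has_curvature_cost: "has_curvature cost curvature"
  unfolding has_curvature_def
proof (intro allI)
  fix p q :: "'th \<times> 'x" and u :: real
  define m where "m = (1 - u) *\<^sub>R p + u *\<^sub>R q"
  have prior: "prior_cost (fst m) = (1 - u) * prior_cost (fst p) + u * prior_cost (fst q)
      - u * (1 - u) * inner (fst (p - q)) (U0 (fst (p - q)))"
  proof -
    have "fst m - theta0 = (1 - u) *\<^sub>R (fst p - theta0) + u *\<^sub>R (fst q - theta0)"
      unfolding m_def by (simp add: algebra_simps)
    then show ?thesis
      unfolding prior_cost_def
      using inner_blinfun_convex_combination[of u "fst p - theta0" "fst q - theta0" U0] by simp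
  qed
  have pointwise: "(norm (residual t - output_map m t))\<^sup>2
      = (1 - u) * (norm (residual t - output_map p t))\<^sup>2 + u * (norm (residual t - output_map q t))\<^sup>2
        - u * (1 - u) * (norm (output_map (p - q) t))\<^sup>2" for t
  proof -
    have "residual t - output_map m t
        = (1 - u) *\<^sub>R (residual t - output_map p t) + u *\<^sub>R (residual t - output_map q t)"
      unfolding m_def output_map_lincomb by (simp add: algebra_simps)
    moreover have "(residual t - output_map p t) - (residual t - output_map q t) = - output_map (p - q) t"
      unfolding output_map_diff by simp
    ultimately show ?thesis
      using norm_convex_combination_power2[of u "residual t - output_map p t" "residual t - output_map q t"]
      by simp
  qed
  have fit: "fit_cost m = (1 - u) * fit_cost p + u * fit_cost q - u * (1 - u) * output_energy (p - q)"
  proof -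
    have "fit_cost m = (LINT t:{0..T}|lborel. ((1 - u) * (norm (residual t - output_map p t))\<^sup>2
        + u * (norm (residual t - output_map q t))\<^sup>2) - u * (1 - u) * (norm (output_map (p - q) t))\<^sup>2)"
      unfolding fit_cost_def pointwise ..
    also have "\<dots> = (LINT t:{0..T}|lborel. (1 - u) * (norm (residual t - output_map p t))\<^sup>2)
        + (LINT t:{0..T}|lborel. u * (norm (residual t - output_map q t))\<^sup>2)
        - (LINT t:{0..T}|lborel. u * (1 - u) * (norm (output_map (p - q) t))\<^sup>2)"
      using set_integrable_fit set_integrable_output_map_power2
      by (simp add: set_integral_diff set_integral_add set_integrable_mult_right)
    finally show ?thesis unfolding fit_cost_def output_energy_def by simp
  qed
  show "cost m = (1 - u) * cost p + u * cost q - u * (1 - u) * curvature (p - q)"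
    unfolding cost_eq curvature_def prior fit by (simp add: algebra_simps)
qed

lemma curvature_le: obtains M where "\<And>h. curvature h \<le> M * (norm h)\<^sup>2"
proof
  define c where "c = 2 * norm C * (1 + B_bound) * exp (2 * lip * T)"
  fix h :: "'th \<times> 'x"
  have "inner (fst h) (U0 (fst h)) \<le> norm U0 * (norm h)\<^sup>2"
  proof -
    have "inner (fst h) (U0 (fst h)) \<le> norm (fst h) * (norm U0 * norm (fst h))"
      using Cauchy_Schwarz_ineq2[of "fst h" "U0 (fst h)"] norm_blinfun[of U0 "fst h"]
      by (meson abs_ge_self mult_left_mono norm_ge_zero order_trans)
    also have "\<dots> \<le> norm U0 * (norm h)\<^sup>2"
    proof -
      have "norm (fst h) * norm (fst h) \<le> norm h * norm h"
        using norm_fst_le[of "fst h" "snd h"] by (intro mult_mono) auto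
      then have "norm U0 * (norm (fst h) * norm (fst h)) \<le> norm U0 * (norm h * norm h)"
        by (rule mult_left_mono) simp
      then show ?thesis by (simp add: power2_eq_square mult_ac)
    qed
    finally show ?thesis .
  qed
  moreover have "output_energy h \<le> (LINT t:{0..T}|lborel. (c * norm h)\<^sup>2)"
    unfolding output_energy_def
  proof (rule set_integral_mono[OF set_integrable_output_map_power2 set_integrable_const_atLeastAtMost])
    fix t assume "t \<in> {0..T}"
    then show "(norm (output_map h t))\<^sup>2 \<le> (c * norm h)\<^sup>2"
      unfolding c_def by (intro power_mono norm_output_map_le) auto
  qed
  moreover have "(LINT t:{0..T}|lborel. (c * norm h)\<^sup>2) = T * (c * norm h)\<^sup>2"
    by (subst set_integral_const) (use T_pos in auto)
  ultimately have "curvature h \<le> norm U0 * (norm h)\<^sup>2 + T * (c * norm h)\<^sup>2"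
    unfolding curvature_def by linarith
  then show "curvature h \<le> (norm U0 + T * c\<^sup>2) * (norm h)\<^sup>2"
    by (simp add: power_mult_distrib algebra_simps)
qed

lemma observability_estimate:
  obtains a b where "a \<ge> 0" "b \<ge> 0"
    "\<And>h. gamma0\<^sup>2 * (norm (snd h))\<^sup>2 \<le> a * output_energy h + b * (norm (fst h))\<^sup>2"
proof
  define \<rho> where "\<rho> = \<bar>kappa\<bar> * norm (badj C)"
  show "0 \<le> 2 + 4 * T\<^sup>2 * (norm C)\<^sup>2 * \<rho>\<^sup>2" by simp
  show "0 \<le> 4 * T * (norm C)\<^sup>2 * B_bound\<^sup>2" using T_pos by simp
  fix h :: "'th \<times> 'x"
  define I1 where "I1 = (LINT s:{0..T}|lborel. norm (output_map h s))"
  define e where "e = norm C * (B_bound * norm (fst h) + \<rho> * I1)"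
  have pointwise: "(norm (C (S t (snd h))))\<^sup>2 \<le> 2 * (norm (output_map h t))\<^sup>2 + 2 * e\<^sup>2"
    if "t \<in> {0..T}" for t
  proof -
    have "(norm (C (S t (snd h))))\<^sup>2 \<le> (norm (output_map h t) + e)\<^sup>2"
      using norm_C_S_le[OF that, of h] by (intro power_mono) (auto simp: e_def \<rho>_def I1_def)
    also have "\<dots> \<le> 2 * (norm (output_map h t))\<^sup>2 + 2 * e\<^sup>2" by (rule power2_add_le)
    finally show ?thesis .
  qed
  have "gamma0\<^sup>2 * (norm (snd h))\<^sup>2 \<le> (LINT t:{0..T}|lborel. (norm (C (S t (snd h))))\<^sup>2)"
    by (rule observable)
  also have "\<dots> \<le> (LINT t:{0..T}|lborel. 2 * (norm (output_map h t))\<^sup>2 + 2 * e\<^sup>2)"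
  proof (rule set_integral_mono[OF _ _ pointwise])
    have "continuous_on {0..T} (\<lambda>t. S t (snd h))"
      by (rule continuous_on_subset[OF strongly_continuous]) auto
    then have "continuous_on {0..T} (\<lambda>t. C (S t (snd h)))"
      by (rule bounded_linear.continuous_on[OF blinfun.bounded_linear_right])
    then show "set_integrable lborel {0..T} (\<lambda>t. (norm (C (S t (snd h))))\<^sup>2)"
      using continuous_on_power[OF continuous_on_norm, of _ _ 2] by (intro borel_integrable_atLeastAtMost') blast
    show "set_integrable lborel {0..T} (\<lambda>t. 2 * (norm (output_map h t))\<^sup>2 + 2 * e\<^sup>2)"
      using set_integrable_output_map_power2 set_integrable_const_atLeastAtMost
      by (intro set_integral_add(1) set_integrable_mult_right)
  qed
  also have "\<dots> = 2 * output_energy h + 2 * T * e\<^sup>2"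
    using set_integrable_output_map_power2 set_integrable_const_atLeastAtMost T_pos
    by (simp add: output_energy_def set_integral_add set_integral_const)
  also have "\<dots> \<le> 2 * output_energy h + 2 * T * (2 * (norm C)\<^sup>2 * B_bound\<^sup>2 * (norm (fst h))\<^sup>2
      + 2 * (norm C)\<^sup>2 * \<rho>\<^sup>2 * (T * output_energy h))"
  proof -
    have "I1\<^sup>2 \<le> T * output_energy h"
      unfolding I1_def output_energy_def
      by (rule set_integral_power2_le[OF T_pos set_integrable_norm_output_map]) (simp add: set_integrable_output_map_power2)
    then have "e\<^sup>2 \<le> 2 * (norm C)\<^sup>2 * B_bound\<^sup>2 * (norm (fst h))\<^sup>2 + 2 * (norm C)\<^sup>2 * \<rho>\<^sup>2 * (T * output_energy h)"
      using power2_add_le[of "norm C * B_bound * norm (fst h)" "norm C * \<rho> * I1"]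
        mult_left_mono[of "I1\<^sup>2" "T * output_energy h" "2 * (norm C)\<^sup>2 * \<rho>\<^sup>2"]
      by (simp add: e_def algebra_simps power_mult_distrib)
    then show ?thesis using T_pos by (simp add: mult_left_mono)
  qed
  finally show "gamma0\<^sup>2 * (norm (snd h))\<^sup>2 \<le> (2 + 4 * T\<^sup>2 * (norm C)\<^sup>2 * \<rho>\<^sup>2) * output_energy h
      + 4 * T * (norm C)\<^sup>2 * B_bound\<^sup>2 * (norm (fst h))\<^sup>2"
    by (simp add: power2_eq_square algebra_simps)
qed

lemma curvature_coercive:
  obtains c where "c > 0" "\<And>h. c * (norm h)\<^sup>2 \<le> curvature h"
proof -
  obtain a b where a: "a \<ge> 0" and b: "b \<ge> 0"
    and obs: "\<And>h. gamma0\<^sup>2 * (norm (snd h))\<^sup>2 \<le> a * output_energy h + b * (norm (fst h))\<^sup>2"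
    using observability_estimate by blast
  define D where "D = a + b / delta + 1"
  define m where "m = min (gamma0\<^sup>2) delta"
  have D: "D > 0" unfolding D_def using a b delta by (simp add: add_nonneg_pos)
  have m: "m > 0" unfolding m_def using gamma0 delta by simp
  have "m / D * (norm h)\<^sup>2 \<le> curvature h" for h
  proof -
    have energy: "output_energy h \<le> curvature h"
      unfolding curvature_def using inner_U0_nonneg[of "fst h"] by simp
    have prior: "delta * (norm (fst h))\<^sup>2 \<le> curvature h"
      unfolding curvature_def using U0_coercive[of "fst h"] output_energy_nonneg[of h] by simp
    have "(b / delta + 1) * (delta * (norm (fst h))\<^sup>2) = b * (norm (fst h))\<^sup>2 + delta * (norm (fst h))\<^sup>2"
      using delta by (simp add: field_simps)
    then have "gamma0\<^sup>2 * (norm (snd h))\<^sup>2 + delta * (norm (fst h))\<^sup>2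
        \<le> a * output_energy h + (b / delta + 1) * (delta * (norm (fst h))\<^sup>2)"
      using obs[of h] by linarith
    also have "\<dots> \<le> a * curvature h + (b / delta + 1) * curvature h"
      using energy prior a b delta by (intro add_mono mult_left_mono) auto
    also have "\<dots> = D * curvature h" unfolding D_def by (simp add: algebra_simps)
    finally have "gamma0\<^sup>2 * (norm (snd h))\<^sup>2 + delta * (norm (fst h))\<^sup>2 \<le> D * curvature h" .
    moreover have "m * (norm (fst h))\<^sup>2 \<le> delta * (norm (fst h))\<^sup>2"
      and "m * (norm (snd h))\<^sup>2 \<le> gamma0\<^sup>2 * (norm (snd h))\<^sup>2"
      unfolding m_def by (simp_all add: mult_right_mono)
    then have "m * (norm h)\<^sup>2 \<le> gamma0\<^sup>2 * (norm (snd h))\<^sup>2 + delta * (norm (fst h))\<^sup>2"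
      unfolding norm_prod_power2[of h] by (simp add: distrib_left)
    ultimately show ?thesis using D by (simp add: field_simps)
  qed
  with m D show ?thesis by (intro that[of "m / D"]) auto
qed

lemma strict_convex_on_cost: "strict_convex_on UNIV cost"
proof -
  obtain c where c: "c > 0" "\<And>h. c * (norm h)\<^sup>2 \<le> curvature h"
    using curvature_coercive by blast
  show ?thesis
  proof (rule strict_convex_on_if_curvature_pos[OF has_curvature_cost])
    fix h :: "'th \<times> 'x" assume "h \<noteq> 0"
    then have "0 < c * (norm h)\<^sup>2" using c(1) by simp
    then show "0 < curvature h" using c(2)[of h] by linarith
  qed
qed

lemma ex1_minimizer_cost: "\<exists>!p. \<forall>q. cost p \<le> cost q"
proof -
  obtain c where c: "c > 0" "\<And>h. c * (norm h)\<^sup>2 \<le> curvature h"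
    using curvature_coercive by blast
  obtain M where "\<And>h. curvature h \<le> M * (norm h)\<^sup>2" using curvature_le by blast
  then have "continuous_on UNIV cost"
    by (rule continuous_on_if_curvature_bounded[OF has_curvature_cost _ cost_nonneg])
  then show ?thesis
    by (rule ex1_minimizer_if_curvature_coercive[OF has_curvature_cost c cost_nonneg])
qed

end

theorem mainTheorem2:
  fixes A :: "'x::{real_inner, polish_space} \<Rightarrow> 'x" and D :: "'x set"
    and S :: "real \<Rightarrow> ('x \<Rightarrow>\<^sub>L 'x)"
    and C :: "'x \<Rightarrow>\<^sub>L 'y::{real_inner, polish_space}"
    and B :: "real \<Rightarrow> ('th::{real_inner, polish_space} \<Rightarrow>\<^sub>L 'x)"
    and y :: "real \<Rightarrow> 'y" and theta0 :: 'th and kappa T delta gamma0 :: real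
    and U0 :: "'th \<Rightarrow>\<^sub>L 'th"
  assumes T: "T > 0"
    and semigroup: "contraction_semigroup S" and gen: "is_generator A D S"
    and B_meas: "set_borel_measurable lborel {0..T} B"
    and B_L2: "set_integrable lborel {0..T} (\<lambda>t. (norm (B t))\<^sup>2)"
    and y_meas: "set_borel_measurable lborel {0..T} y"
    and y_L2: "set_integrable lborel {0..T} (\<lambda>t. (norm (y t))\<^sup>2)"
    and kappa: "kappa \<ge> 0"
    and U0_sa: "\<forall>a b. inner (U0 a) b = inner a (U0 b)"
    and delta: "delta > 0" and U0_coercive: "\<forall>a. inner a (U0 a) \<ge> delta * (norm a)\<^sup>2"
    and gamma0: "gamma0 > 0"
    and obs: "\<forall>x. (\<integral>t\<in>{0..T}. (norm (C (S t x)))\<^sup>2 \<partial>lborel) \<ge> gamma0\<^sup>2 * (norm x)\<^sup>2"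
  shows "strict_convex_on UNIV (\<lambda>p. costJ S B C kappa y T U0 theta0 (fst p) (snd p))
       \<and> (\<exists>!p. \<forall>q. costJ S B C kappa y T U0 theta0 (fst p) (snd p)
                     \<le> costJ S B C kappa y T U0 theta0 (fst q) (snd q))"
proof -
  have "contraction_family S T"
    using T semigroup unfolding contraction_semigroup_def contraction_family_def by auto
  then interpret observer_cost S T C B y kappa U0 theta0 delta gamma0
    using B_meas B_L2 y_meas y_L2 delta U0_coercive gamma0 obs
    by (intro observer_cost.intro observer_problem.intro observer_cost_axioms.intro
        observer_problem_axioms.intro) auto
  have "(\<lambda>p. costJ S B C kappa y T U0 theta0 (fst p) (snd p)) = cost"
    by (simp add: cost_def fun_eq_iff)
  with strict_convex_on_cost ex1_minimizer_cost show ?thesis by (simp add: cost_def)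
qed

end
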